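(* Let $\{R_\theta\}_{\theta\in\Theta}\subseteq\mathcal R$ be submodular and $p_\theta\in\mathbb R$ for $\theta\in\Theta$. Then $(R_\theta,p_\theta)_{\theta\in\Theta}$ is individually rational and incentive compatible if and only if both of the following hold: (1) for every $\theta\in\Theta$, $$p_\theta=p_{\underline\theta}+\int_0^{\bar L}\big[1-g_{\underline\theta}(F_{\underline\theta}(l))\big]\frac{\partial R_{\underline\theta}(l)}{\partial l}dl-\int_{\underline\theta}^{\theta}\int_0^{\bar L}\Big[\frac{\partial g_s}{\partial s}(F_s(l))+g_s'(F_s(l))\frac{\partial F_s(l)}{\partial s}\Big]\frac{\partial R_s(l)}{\partial l}\,dl\,ds-\int_0^{\bar L}\big[1-g_\theta(F_\theta(l))\big]\frac{\partial R_\theta(l)}{\partial l}dl,$$ with $p_{\underline\theta}\le\int_0^{\bar L}\big[1-g_{\underline\theta}(F_{\underline\theta}(l))\big]\big[1-\frac{\partial R_{\underline\theta}(l)}{\partial l}\big]dl$; and (2) $\int_\Theta V_\theta(R_\theta,p_\theta)\,d\mu\ge0$.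
   Context: Setting (Yaari dual-utility insurance model). $(S,\Sigma,\mathbb P)$ is a probability space. Types: $\Theta=[\underline\theta,\bar\theta]$ with Borel $\sigma$-algebra and a probability measure $\mu$ with a Lebesgue density $q$. Fix $\bar L<\infty$. For each $\theta$ the type-$\theta$ agent faces a loss $L_\theta$ (bounded, $\Sigma$-measurable, values in $[0,\bar L]$) with continuous distribution function $F_\theta(l)=\mathbb P(L_\theta\le l)$. Retention functions: $\mathcal R=\{R:[0,\bar L]\to[0,\bar L]: R(0)=0,\ 0\le\partial R(l)/\partial l\le1\}$. A menu is a family $(R_\theta,p_\theta)_{\theta\in\Theta}$. A collection $\{R_\theta\}$ is submodular if $\partial R_\theta(l)/\partial l$ is non-increasing in $\theta$ for every $l$. A distortion function is a nondecreasing $g:[0,1]\to[0,1]$ with $g(0)=0,g(1)=1$; type $\theta$ has distortion $g_\theta$ (with $g'_\theta$ the derivative in $t$), the insurer $g^{In}$. Utilities: $U_\theta(R,p)=-p-\int_0^{\bar L}[1-g_\theta(F_\theta(l))]\frac{\partial R(l)}{\partial l}dl$, $V_\theta(R,p)=p-\int_0^{\bar L}[1-g^{In}(F_\theta(l))](1-\frac{\partial R(l)}{\partial l})dl$, no-insurance utility $U_\theta(L_\theta,0)=-\int_0^{\bar L}[1-g_\theta(F_\theta(l))]dl$. Throughout, for every menu the maps $\theta\mapsto U_\theta(R_\theta,p_\theta)$, $\theta\mapsto V_\theta(R_\theta,p_\theta)$ lie in $L^1(\Theta,\mu)$. Individually rational: (P1) $U_\theta(R_\theta,p_\theta)\ge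 U_\theta(L_\theta,0)$ for all $\theta$ and (P2) $\int_\Theta V_\theta(R_\theta,p_\theta)d\mu\ge0$. Incentive compatible: $U_\theta(R_\theta,p_\theta)\ge U_\theta(R_{\theta'},p_{\theta'})$ for all $\theta,\theta'$. Standing assumptions: (A1) $g^{In}(t)\ge g_\theta(t)$ for all $t,\theta$. (A2) $\theta\mapsto F_\theta(l)$ differentiable, $\{F_\theta\}$ uniformly Lipschitz in $\theta$, $\partial F_\theta(l)/\partial\theta\le0$ for all $l$. (A3) each $g_\theta$ differentiable with $g'_\theta\le\delta$ for a common $\delta<\infty$; $\theta\mapsto g_\theta(t)$ differentiable, uniformly Lipschitz in $\theta$; $\partial g_\theta(t)/\partial\theta\le0$ for $t\in(0,1)$. *)

theory Defs
  imports "HOL-Probability.Probability"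
begin

definition dR :: "real \<Rightarrow> (real \<Rightarrow> real) \<Rightarrow> real \<Rightarrow> real" where
  "dR Lbar R l = vector_derivative R (at l within {0..Lbar})"

definition retention :: "real \<Rightarrow> (real \<Rightarrow> real) \<Rightarrow> bool" where
  "retention Lbar R \<longleftrightarrow> R 0 = 0 \<and> (\<forall>l\<in>{0..Lbar}. R l \<in> {0..Lbar}) \<and>
     (\<forall>l\<in>{0..Lbar}. R differentiable (at l within {0..Lbar}) \<and>
        0 \<le> dR Lbar R l \<and> dR Lbar R l \<le> 1)"

definition distortion :: "(real \<Rightarrow> real) \<Rightarrow> bool" where
  "distortion g \<longleftrightarrow> mono_on {0..1} g \<and> (\<forall>t\<in>{0..1}. g t \<in> {0..1}) \<and> g 0 = 0 \<and> g 1 = 1"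

text \<open>Agent's Yaari utility U_theta(R,p), with distortion g and loss distribution F.\<close>
definition Uag :: "real \<Rightarrow> (real \<Rightarrow> real) \<Rightarrow> (real \<Rightarrow> real) \<Rightarrow> (real \<Rightarrow> real) \<Rightarrow> real \<Rightarrow> real" where
  "Uag Lbar g F R p = - p - integral {0..Lbar} (\<lambda>l. (1 - g (F l)) * dR Lbar R l)"

text \<open>Insurer's Yaari utility V_theta(R,p), with insurer distortion gIn.\<close>
definition Vin :: "real \<Rightarrow> (real \<Rightarrow> real) \<Rightarrow> (real \<Rightarrow> real) \<Rightarrow> (real \<Rightarrow> real) \<Rightarrow> real \<Rightarrow> real" where
  "Vin Lbar gIn F R p = p - integral {0..Lbar} (\<lambda>l. (1 - gIn (F l)) * (1 - dR Lbar R l))"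

end

(*
  Envelope-theorem argument.  For a fixed contract R the utility of type \<theta> is
  -p - R(Lbar) + \<integral> g\<^sub>\<theta>(F\<^sub>\<theta>) dR.  The map \<theta> \<mapsto> g\<^sub>\<theta>(F\<^sub>\<theta>(l)) is only separately differentiable in its two
  occurrences of \<theta>, but integrating its difference quotients along the diagonal shows that this utility
  is the integral of its slope \<integral> (\<partial>\<^sub>\<theta>g + g' \<partial>\<^sub>\<theta>F) dR.  Incentive compatibility squeezes the increments of
  the truthful utility between the slopes of the neighbouring contracts.  By submodularity these slopes
  are monotone in the report, with gaps bounded by the increments of the monotone map u \<mapsto> -R\<^sub>u(Lbar), so a
  telescoping argument over fine grids shows that the truthful slope is integrable and that the truthful
  utility is its integral: this is the price formula.  Conversely the formula and the same sandwich give
  incentive compatibility, and participation reduces to the lowest type because full retention has the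
  smallest slope.  The insurer's participation constraint appears unchanged on both sides.
*)

theory Submission
  imports Defs
begin

section \<open>Difference quotients\<close>

lemma DERIV_difference_quotient_sequentially:
  fixes f :: "real \<Rightarrow> real"
  assumes "(f has_real_derivative D) (at x within S)" "y \<longlonglongrightarrow> x"
    and "\<forall>\<^sub>F n in sequentially. y n \<in> S \<and> y n \<noteq> x"
  shows "(\<lambda>n. (f (y n) - f x) / (y n - x)) \<longlonglongrightarrow> D"
proof -
  have "((\<lambda>z. (f z - f x) / (z - x)) \<longlongrightarrow> D) (at x within S)"
    using assms(1) by (simp add: has_field_derivative_iff)
  moreover have "filterlim y (at x within S) sequentially"
    using assms(2,3) by (auto simp: filterlim_at)
  ultimately show ?thesis
    by (rule filterlim_compose)
qed

lemma DERIV_abs_le_if_lipschitz: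
  fixes f :: "real \<Rightarrow> real"
  assumes "(f has_real_derivative D) (at x within S)" "x islimpt S"
    and "\<And>y. y \<in> S \<Longrightarrow> \<bar>f y - f x\<bar> \<le> K * \<bar>y - x\<bar>"
  shows "\<bar>D\<bar> \<le> K"
proof (rule tendsto_upperbound)
  show "((\<lambda>y. \<bar>(f y - f x) / (y - x)\<bar>) \<longlongrightarrow> \<bar>D\<bar>) (at x within S)"
    using assms(1) by (intro tendsto_rabs) (simp add: has_field_derivative_iff)
  show "\<forall>\<^sub>F y in at x within S. \<bar>(f y - f x) / (y - x)\<bar> \<le> K"
    using assms(3) by (auto simp: eventually_at_filter divide_le_eq intro!: always_eventually)
  show "\<not> trivial_limit (at x within S)"
    using assms(2) by (simp add: trivial_limit_within)
qed

lemma DERIV_nonneg_if_mono_on: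
  fixes f :: "real \<Rightarrow> real"
  assumes "mono_on S f" "(f has_real_derivative D) (at x within S)" "x \<in> S" "x islimpt S"
  shows "0 \<le> D"
proof (rule tendsto_lowerbound)
  show "((\<lambda>y. (f y - f x) / (y - x)) \<longlongrightarrow> D) (at x within S)"
    using assms(2) by (simp add: has_field_derivative_iff)
  have "0 \<le> (f y - f x) / (y - x)" if "y \<in> S" "y \<noteq> x" for y
  proof (cases "y < x")
    case True
    then show ?thesis
      using assms(1,3) that by (auto simp: mono_on_def divide_nonpos_neg)
  next
    case False
    then show ?thesis
      using assms(1,3) that by (auto simp: mono_on_def divide_nonneg_pos)
  qed
  then show "\<forall>\<^sub>F y in at x within S. 0 \<le> (f y - f x) / (y - x)"
    by (auto simp: eventually_at_filter intro!: always_eventually)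
  show "\<not> trivial_limit (at x within S)"
    using assms(4) by (simp add: trivial_limit_within)
qed

section \<open>Integrated difference quotients\<close>

lemma tendsto_integral_dominated_subintervals:
  fixes f :: "nat \<Rightarrow> real \<Rightarrow> real" and u v :: "nat \<Rightarrow> real"
  assumes sub: "\<And>n. {u n..v n} \<subseteq> {a..b}"
    and int: "\<And>n. f n integrable_on {u n..v n}"
    and bound: "\<And>n s. s \<in> {u n..v n} \<Longrightarrow> \<bar>f n s\<bar> \<le> B"
    and cover: "\<And>s. s \<in> {a<..<b} \<Longrightarrow> \<forall>\<^sub>F n in sequentially. s \<in> {u n..v n}"
    and lim: "\<And>s. s \<in> {a<..<b} \<Longrightarrow> (\<lambda>n. f n s) \<longlonglongrightarrow> f_lim s"
  shows "f_lim integrable_on {a..b}"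
    and "(\<lambda>n. integral {u n..v n} (f n)) \<longlonglongrightarrow> integral {a..b} f_lim"
proof -
  define f' where "f' n s = (if s \<in> {u n..v n} then f n s else 0)" for n s
  have restrict: "{u n..v n} \<inter> {a..b} = {u n..v n}" for n
    using sub[of n] by blast
  have "f' n integrable_on {a..b}" for n
    using int[of n] unfolding f'_def integrable_restrict_Int restrict .
  then have f'_int: "f' n integrable_on {a<..<b}" for n
    by (simp add: integrable_on_open_interval_real)
  have f'_integral: "integral {a<..<b} (f' n) = integral {u n..v n} (f n)" for n
    unfolding f'_def integral_open_interval_real[symmetric] integral_restrict_Int restrict ..
  have f'_lim: "(\<lambda>n. f' n s) \<longlonglongrightarrow> f_lim s" if "s \<in> {a<..<b}" for s
    using lim[OF that] by (rule Lim_transform_eventually)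
      (use cover[OF that] in \<open>auto simp: f'_def elim: eventually_mono\<close>)
  have "(\<lambda>_. max B 0) integrable_on {a<..<b}"
    by (simp add: integrable_on_open_interval_real integrable_const_ivl)
  moreover have "norm (f' n s) \<le> max B 0" if "s \<in> {a<..<b}" for n s
    using bound[of s n] by (auto simp: f'_def)
  ultimately have "f_lim integrable_on {a<..<b}"
    "(\<lambda>n. integral {a<..<b} (f' n)) \<longlonglongrightarrow> integral {a<..<b} f_lim"
    using dominated_convergence[of f' "{a<..<b}" "\<lambda>_. max B 0" f_lim] f'_int f'_lim by blast+
  then show "f_lim integrable_on {a..b}" "(\<lambda>n. integral {u n..v n} (f n)) \<longlonglongrightarrow> integral {a..b} f_lim"
    by (simp_all add: integrable_on_open_interval_real integral_open_interval_real f'_integral)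
qed

lemma tendsto_integral_difference_quotients:
  fixes \<psi> :: "real \<Rightarrow> real \<Rightarrow> real" and e u v :: "nat \<Rightarrow> real"
  assumes deriv: "\<And>\<sigma>. \<sigma> \<in> {a..b} \<Longrightarrow> (\<psi> \<sigma> has_real_derivative D \<sigma>) (at \<sigma> within {a..b})"
    and lip: "\<And>\<sigma> x. \<sigma> \<in> {a..b} \<Longrightarrow> x \<in> {a..b} \<Longrightarrow> \<bar>\<psi> \<sigma> x - \<psi> \<sigma> \<sigma>\<bar> \<le> C * \<bar>x - \<sigma>\<bar>"
    and e: "e \<longlonglongrightarrow> 0" "\<And>n. e n \<noteq> 0"
    and sub: "\<And>n. {u n..v n} \<subseteq> {a..b}" and shift: "\<And>n \<sigma>. \<sigma> \<in> {u n..v n} \<Longrightarrow> \<sigma> + e n \<in> {a..b}"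
    and cover: "\<And>\<sigma>. \<sigma> \<in> {a<..<b} \<Longrightarrow> \<forall>\<^sub>F n in sequentially. \<sigma> \<in> {u n..v n}"
    and cont: "\<And>n. continuous_on {u n..v n} (\<lambda>\<sigma>. (\<psi> \<sigma> (\<sigma> + e n) - \<psi> \<sigma> \<sigma>) / e n)"
  shows "D integrable_on {a..b}"
    and "(\<lambda>n. integral {u n..v n} (\<lambda>\<sigma>. (\<psi> \<sigma> (\<sigma> + e n) - \<psi> \<sigma> \<sigma>) / e n)) \<longlonglongrightarrow> integral {a..b} D"
proof -
  have "\<bar>(\<psi> \<sigma> (\<sigma> + e n) - \<psi> \<sigma> \<sigma>) / e n\<bar> \<le> C" if "\<sigma> \<in> {u n..v n}" for n \<sigma>
    using lip[of \<sigma> "\<sigma> + e n"] sub[of n] shift[OF that] that e(2)[of n]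
    by (auto simp: abs_divide divide_le_eq)
  moreover have "(\<lambda>n. (\<psi> \<sigma> (\<sigma> + e n) - \<psi> \<sigma> \<sigma>) / e n) \<longlonglongrightarrow> D \<sigma>" if "\<sigma> \<in> {a<..<b}" for \<sigma>
  proof -
    have "\<forall>\<^sub>F n in sequentially. \<sigma> + e n \<in> {a..b} \<and> \<sigma> + e n \<noteq> \<sigma>"
      using cover[OF that] by (rule eventually_mono) (use shift e(2) in auto)
    then show ?thesis
      using DERIV_difference_quotient_sequentially[OF deriv tendsto_add[OF tendsto_const e(1)], of \<sigma>] that
      by simp
  qed
  ultimately show "D integrable_on {a..b}"
    and "(\<lambda>n. integral {u n..v n} (\<lambda>\<sigma>. (\<psi> \<sigma> (\<sigma> + e n) - \<psi> \<sigma> \<sigma>) / e n)) \<longlonglongrightarrow> integral {a..b} D"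
    using tendsto_integral_dominated_subintervals[OF sub integrable_continuous_interval[OF cont] _ cover]
    by blast+
qed

lemma integral_difference_quotient_tendsto:
  fixes w :: "real \<Rightarrow> real" and h :: "nat \<Rightarrow> real"
  assumes w: "continuous_on {a..b} w" and h: "h \<longlonglongrightarrow> 0" "\<And>n. 0 < h n" "\<And>n. h n \<le> b - a"
  shows "(\<lambda>n. integral {a..b - h n} (\<lambda>s. (w (s + h n) - w s) / h n)) \<longlonglongrightarrow> w b - w a"
proof -
  define W where "W x = integral {a..x} w" for x
  have W_deriv: "(W has_real_derivative w x) (at x within {a..b})" if "x \<in> {a..b}" for x
    unfolding W_def by (rule integral_has_real_derivative[OF w that])
  have w_int: "w integrable_on {c..d}" if "a \<le> c" "d \<le> b" for c d
    by (rule integrable_continuous_interval, rule continuous_on_subset[OF w]) (use that in auto)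
  have W_diff: "integral {c..d} w = W d - W c" if "a \<le> c" "c \<le> d" "d \<le> b" for c d
    using Henstock_Kurzweil_Integration.integral_combine[of a c d w] w_int[of a d] that
    unfolding W_def by simp
  have eq: "integral {a..b - h n} (\<lambda>s. (w (s + h n) - w s) / h n)
      = (W b - W (b - h n)) / h n - (W (a + h n) - W a) / h n" for n
  proof -
    have shift: "integral {a..b - h n} (\<lambda>s. w (s + h n)) = integral {a + h n..b} w"
      using integral_shift_real_ivl[of "a + h n" "h n" b w] by simp
    have "(\<lambda>s. w (s + h n)) integrable_on {a..b - h n}"
      using integrable_shift_real_ivl[OF w_int[of "a + h n" b], of "h n"] h(2)[of n] by simp
    then show ?thesis
      using h(2,3)[of n] w_int[of a "b - h n"]
      by (simp add: integral_diff shift W_diff diff_divide_distrib)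
  qed
  have upper: "(\<lambda>n. (W b - W (b - h n)) / h n) \<longlonglongrightarrow> w b"
  proof -
    have "b - h n \<in> {a..b} \<and> b - h n \<noteq> b" for n
      using h(2,3)[of n] by simp
    then have "(\<lambda>n. (W (b - h n) - W b) / (b - h n - b)) \<longlonglongrightarrow> w b"
      using h(2,3)[of 0] tendsto_diff[OF tendsto_const h(1), of b]
      by (intro DERIV_difference_quotient_sequentially[OF W_deriv] always_eventually allI) auto
    moreover have "(W (b - h n) - W b) / (b - h n - b) = (W b - W (b - h n)) / h n" for n
      by (simp add: divide_simps)
    ultimately show ?thesis by simp
  qed
  have lower: "(\<lambda>n. (W (a + h n) - W a) / h n) \<longlonglongrightarrow> w a"
  proof -
    have "a + h n \<in> {a..b} \<and> a + h n \<noteq> a" for n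
      using h(2,3)[of n] by simp
    then have "(\<lambda>n. (W (a + h n) - W a) / (a + h n - a)) \<longlonglongrightarrow> w a"
      using h(2,3)[of 0] tendsto_add[OF tendsto_const h(1), of a]
      by (intro DERIV_difference_quotient_sequentially[OF W_deriv] always_eventually allI) auto
    then show ?thesis by simp
  qed
  show ?thesis
    unfolding eq by (intro tendsto_diff upper lower)
qed

context
  fixes \<phi> :: "real \<Rightarrow> real \<Rightarrow> real" and a b C :: real
  assumes lip1: "\<And>x x' y. x \<in> {a..b} \<Longrightarrow> x' \<in> {a..b} \<Longrightarrow> y \<in> {a..b} \<Longrightarrow> \<bar>\<phi> x y - \<phi> x' y\<bar> \<le> C * \<bar>x - x'\<bar>"
    and lip2: "\<And>x y y'. x \<in> {a..b} \<Longrightarrow> y \<in> {a..b} \<Longrightarrow> y' \<in> {a..b} \<Longrightarrow> \<bar>\<phi> x y - \<phi> x y'\<bar> \<le> C * \<bar>y - y'\<bar>"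
begin

lemma continuous_on_shifted_diagonal:
  assumes "a < b" and shift: "\<And>\<sigma>. \<sigma> \<in> {u..v} \<Longrightarrow> \<sigma> + c \<in> {a..b} \<and> \<sigma> + d \<in> {a..b}"
  shows "continuous_on {u..v} (\<lambda>\<sigma>. \<phi> (\<sigma> + c) (\<sigma> + d))"
proof (rule lipschitz_on_continuous_on[OF lipschitz_onI])
  fix \<sigma> \<sigma>' assume "\<sigma> \<in> {u..v}" "\<sigma>' \<in> {u..v}"
  with shift lip1[of "\<sigma> + c" "\<sigma>' + c" "\<sigma> + d"] lip2[of "\<sigma>' + c" "\<sigma> + d" "\<sigma>' + d"]
  show "dist (\<phi> (\<sigma> + c) (\<sigma> + d)) (\<phi> (\<sigma>' + c) (\<sigma>' + d)) \<le> (2 * C) * dist \<sigma> \<sigma>'"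
    by (simp add: dist_real_def)
next
  have "0 \<le> C * \<bar>a - b\<bar>"
    using lip1[of a b a] \<open>a < b\<close> by (meson abs_ge_zero atLeastAtMost_iff less_imp_le order.refl order_trans)
  with \<open>a < b\<close> show "0 \<le> 2 * C"
    by (simp add: zero_le_mult_iff)
qed

lemma continuous_on_diagonal_quotients:
  assumes "0 < h" "h < b - a"
  shows "continuous_on {a + h..b} (\<lambda>\<sigma>. (\<phi> (\<sigma> + - h) \<sigma> - \<phi> \<sigma> \<sigma>) / - h)"
    and "continuous_on {a..b - h} (\<lambda>s. (\<phi> s (s + h) - \<phi> s s) / h)"
proof -
  have ab: "a < b"
    using assms by simp
  have "continuous_on {a + h..b} (\<lambda>\<sigma>. \<phi> (\<sigma> + - h) (\<sigma> + 0))"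
    by (rule continuous_on_shifted_diagonal[OF ab]) (use assms in auto)
  moreover have "continuous_on {a + h..b} (\<lambda>\<sigma>. \<phi> (\<sigma> + 0) (\<sigma> + 0))"
    by (rule continuous_on_shifted_diagonal[OF ab]) (use assms in auto)
  ultimately show "continuous_on {a + h..b} (\<lambda>\<sigma>. (\<phi> (\<sigma> + - h) \<sigma> - \<phi> \<sigma> \<sigma>) / - h)"
    using continuous_on_divide[OF continuous_on_diff continuous_on_const, of "{a + h..b}"
        "\<lambda>\<sigma>. \<phi> (\<sigma> + - h) (\<sigma> + 0)" "\<lambda>\<sigma>. \<phi> (\<sigma> + 0) (\<sigma> + 0)" "- h"] assms
    by simp
  have "continuous_on {a..b - h} (\<lambda>s. \<phi> (s + 0) (s + h))"
    by (rule continuous_on_shifted_diagonal[OF ab]) (use assms in auto)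
  moreover have "continuous_on {a..b - h} (\<lambda>s. \<phi> (s + 0) (s + 0))"
    by (rule continuous_on_shifted_diagonal[OF ab]) (use assms in auto)
  ultimately show "continuous_on {a..b - h} (\<lambda>s. (\<phi> s (s + h) - \<phi> s s) / h)"
    using continuous_on_divide[OF continuous_on_diff continuous_on_const, of "{a..b - h}"
        "\<lambda>s. \<phi> (s + 0) (s + h)" "\<lambda>s. \<phi> (s + 0) (s + 0)" h] assms
    by simp
qed

lemma integral_diagonal_quotient_split:
  assumes "0 < h" "h < b - a"
  shows "integral {a..b - h} (\<lambda>s. (\<phi> (s + h) (s + h) - \<phi> s s) / h)
    = integral {a + h..b} (\<lambda>\<sigma>. (\<phi> (\<sigma> + - h) \<sigma> - \<phi> \<sigma> \<sigma>) / - h)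
      + integral {a..b - h} (\<lambda>s. (\<phi> s (s + h) - \<phi> s s) / h)"
proof -
  define A where "A \<sigma> = (\<phi> (\<sigma> + - h) \<sigma> - \<phi> \<sigma> \<sigma>) / - h" for \<sigma>
  define B where "B s = (\<phi> s (s + h) - \<phi> s s) / h" for s
  have "A integrable_on {a + h..b}" "B integrable_on {a..b - h}"
    unfolding A_def[abs_def] B_def[abs_def]
    using continuous_on_diagonal_quotients[OF assms] by (auto intro: integrable_continuous_interval)
  then have "integral {a..b - h} (\<lambda>s. A (s + h) + B s) = integral {a + h..b} A + integral {a..b - h} B"
    using integrable_shift_real_ivl[of A "a + h" b h] integral_shift_real_ivl[of "a + h" h b A]
    by (simp add: integral_add)
  moreover have "A (s + h) + B s = (\<phi> (s + h) (s + h) - \<phi> s s) / h" for s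
    using assms by (simp add: A_def B_def field_simps)
  ultimately show ?thesis
    by (simp add: A_def[abs_def] B_def[abs_def])
qed

lemma tendsto_integral_diagonal_quotients:
  fixes h :: "nat \<Rightarrow> real"
  assumes D1: "\<And>s. s \<in> {a..b} \<Longrightarrow> ((\<lambda>x. \<phi> x s) has_real_derivative D\<^sub>1 s) (at s within {a..b})"
    and D2: "\<And>s. s \<in> {a..b} \<Longrightarrow> ((\<lambda>y. \<phi> s y) has_real_derivative D\<^sub>2 s) (at s within {a..b})"
    and h: "h \<longlonglongrightarrow> 0" "\<And>n. 0 < h n" "\<And>n. h n < b - a"
  shows "D\<^sub>1 integrable_on {a..b}"
    and "(\<lambda>n. integral {a + h n..b} (\<lambda>\<sigma>. (\<phi> (\<sigma> + - h n) \<sigma> - \<phi> \<sigma> \<sigma>) / - h n)) \<longlonglongrightarrow> integral {a..b} D\<^sub>1"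
    and "D\<^sub>2 integrable_on {a..b}"
    and "(\<lambda>n. integral {a..b - h n} (\<lambda>s. (\<phi> s (s + h n) - \<phi> s s) / h n)) \<longlonglongrightarrow> integral {a..b} D\<^sub>2"
proof -
  have lip1': "\<bar>\<phi> x \<sigma> - \<phi> \<sigma> \<sigma>\<bar> \<le> C * \<bar>x - \<sigma>\<bar>" if "\<sigma> \<in> {a..b}" "x \<in> {a..b}" for \<sigma> x
    using lip1 that by blast
  have lip2': "\<bar>\<phi> \<sigma> x - \<phi> \<sigma> \<sigma>\<bar> \<le> C * \<bar>x - \<sigma>\<bar>" if "\<sigma> \<in> {a..b}" "x \<in> {a..b}" for \<sigma> x
    using lip2 that by blast
  have e: "(\<lambda>n. - h n) \<longlonglongrightarrow> 0"
    using tendsto_minus[OF h(1)] by simp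
  have ne: "- h n \<noteq> 0" "h n \<noteq> 0" and sub: "{a + h n..b} \<subseteq> {a..b}" "{a..b - h n} \<subseteq> {a..b}" for n
    using h(2,3)[of n] by auto
  have shift_A: "\<sigma> + - h n \<in> {a..b}" if "\<sigma> \<in> {a + h n..b}" for n \<sigma>
    using that h(2)[of n] by auto
  have shift_B: "s + h n \<in> {a..b}" if "s \<in> {a..b - h n}" for n s
    using that h(2)[of n] by auto
  have cover_A: "\<forall>\<^sub>F n in sequentially. \<sigma> \<in> {a + h n..b}"
    and cover_B: "\<forall>\<^sub>F n in sequentially. \<sigma> \<in> {a..b - h n}" if "\<sigma> \<in> {a<..<b}" for \<sigma>
    using order_tendstoD(2)[OF h(1), of "min (\<sigma> - a) (b - \<sigma>)"] that by (auto elim: eventually_mono)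
  show "D\<^sub>1 integrable_on {a..b}"
    and "(\<lambda>n. integral {a + h n..b} (\<lambda>\<sigma>. (\<phi> (\<sigma> + - h n) \<sigma> - \<phi> \<sigma> \<sigma>) / - h n)) \<longlonglongrightarrow> integral {a..b} D\<^sub>1"
    using tendsto_integral_difference_quotients[where \<psi>="\<lambda>\<sigma> x. \<phi> x \<sigma>",
        OF D1 lip1' e ne(1) sub(1) shift_A cover_A continuous_on_diagonal_quotients(1)[OF h(2,3)]]
    by blast+
  show "D\<^sub>2 integrable_on {a..b}"
    and "(\<lambda>n. integral {a..b - h n} (\<lambda>s. (\<phi> s (s + h n) - \<phi> s s) / h n)) \<longlonglongrightarrow> integral {a..b} D\<^sub>2"
    using tendsto_integral_difference_quotients[where \<psi>=\<phi>,
        OF D2 lip2' h(1) ne(2) sub(2) shift_B cover_B continuous_on_diagonal_quotients(2)[OF h(2,3)]]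
    by blast+
qed

theorem has_integral_diagonal:
  assumes "a \<le> b"
    and D1: "\<And>s. s \<in> {a..b} \<Longrightarrow> ((\<lambda>x. \<phi> x s) has_real_derivative D\<^sub>1 s) (at s within {a..b})"
    and D2: "\<And>s. s \<in> {a..b} \<Longrightarrow> ((\<lambda>y. \<phi> s y) has_real_derivative D\<^sub>2 s) (at s within {a..b})"
  shows "((\<lambda>s. D\<^sub>1 s + D\<^sub>2 s) has_integral \<phi> b b - \<phi> a a) {a..b}"
proof (cases "a = b")
  case True
  then show ?thesis by auto
next
  case False
  with \<open>a \<le> b\<close> have ab: "a < b" by simp
  define h where "h n = (b - a) / (real n + 2)" for n
  have h: "0 < h n" "h n < b - a" for n
    using ab mult_strict_left_mono[of 1 "real n + 2" "b - a"] by (simp_all add: h_def divide_less_eq)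
  have h_lim: "h \<longlonglongrightarrow> 0"
    unfolding h_def using LIMSEQ_ignore_initial_segment[OF lim_const_over_n[of "b - a"], of 2]
    by (simp add: add.commute)
  \<comment> \<open>Separate differentiability does not make \<open>s \<mapsto> \<phi> s s\<close> differentiable.  Instead, split its
    difference quotient into a backward quotient in the first and a forward quotient in the second
    argument, and pass to the limit only after integrating over \<open>s\<close>.\<close>
  note quotients = tendsto_integral_diagonal_quotients[OF D1 D2 h_lim h]
  have "continuous_on {a..b} (\<lambda>s. \<phi> (s + 0) (s + 0))"
    by (rule continuous_on_shifted_diagonal[OF ab]) auto
  then have "(\<lambda>n. integral {a..b - h n} (\<lambda>s. (\<phi> (s + h n) (s + h n) - \<phi> s s) / h n)) \<longlonglongrightarrow> \<phi> b b - \<phi> a a"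
    using h h_lim by (intro integral_difference_quotient_tendsto[where w="\<lambda>s. \<phi> s s"]) (auto simp: less_imp_le)
  then have "integral {a..b} D\<^sub>1 + integral {a..b} D\<^sub>2 = \<phi> b b - \<phi> a a"
    unfolding integral_diagonal_quotient_split[OF h]
    using tendsto_add[OF quotients(2,4)] LIMSEQ_unique by blast
  then show ?thesis
    using has_integral_add[OF integrable_integral[OF quotients(1)] integrable_integral[OF quotients(3)]] by simp
qed

end

lemma tendsto_integral_difference_quotient_sequentially:
  fixes k :: "real \<Rightarrow> real \<Rightarrow> real" and X :: "nat \<Rightarrow> real"
  assumes s: "s \<in> S"
    and int: "\<And>x. x \<in> S \<Longrightarrow> k x integrable_on {c..d}"
    and lip: "\<And>x l. x \<in> S \<Longrightarrow> l \<in> {c..d} \<Longrightarrow> \<bar>k x l - k s l\<bar> \<le> K * \<bar>x - s\<bar>"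
    and deriv: "\<And>l. l \<in> {c..d} \<Longrightarrow> ((\<lambda>x. k x l) has_real_derivative k' l) (at s within S)"
    and X: "\<And>n. X n \<in> S - {s}" "X \<longlonglongrightarrow> s"
  shows "k' integrable_on {c..d}"
    and "(\<lambda>n. (integral {c..d} (k (X n)) - integral {c..d} (k s)) / (X n - s)) \<longlonglongrightarrow> integral {c..d} k'"
proof -
  define Q where "Q n l = (k (X n) l - k s l) / (X n - s)" for n l
  have "Q n integrable_on {c..d}" for n
    unfolding Q_def[abs_def] using int X(1)[of n] s by (intro integrable_on_divide integrable_diff) auto
  moreover have "norm (Q n l) \<le> \<bar>K\<bar>" if "l \<in> {c..d}" for n l
  proof -
    have "\<bar>k (X n) l - k s l\<bar> \<le> \<bar>K\<bar> * \<bar>X n - s\<bar>"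
      using X(1)[of n] order_trans[OF lip[OF _ that] mult_right_mono[OF abs_ge_self abs_ge_zero]]
      by blast
    then show ?thesis
      using X(1)[of n] by (simp add: Q_def abs_divide divide_le_eq)
  qed
  moreover have "(\<lambda>n. Q n l) \<longlonglongrightarrow> k' l" if "l \<in> {c..d}" for l
  proof -
    have "\<forall>\<^sub>F n in sequentially. X n \<in> S \<and> X n \<noteq> s"
      using X(1) by (intro always_eventually) blast
    then show ?thesis
      unfolding Q_def by (rule DERIV_difference_quotient_sequentially[OF deriv[OF that] X(2)])
  qed
  ultimately have "k' integrable_on {c..d}" "(\<lambda>n. integral {c..d} (Q n)) \<longlonglongrightarrow> integral {c..d} k'"
    using dominated_convergence[of Q "{c..d}" "\<lambda>_. \<bar>K\<bar>" k'] integrable_const_ivl by blast+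
  moreover have "integral {c..d} (Q n) = (integral {c..d} (k (X n)) - integral {c..d} (k s)) / (X n - s)" for n
    using int[of "X n"] int[OF s] X(1)[of n] by (simp add: Q_def[abs_def] integral_diff)
  ultimately show "k' integrable_on {c..d}"
    and "(\<lambda>n. (integral {c..d} (k (X n)) - integral {c..d} (k s)) / (X n - s)) \<longlonglongrightarrow> integral {c..d} k'"
    by simp_all
qed

lemma DERIV_integral_parametric:
  fixes k :: "real \<Rightarrow> real \<Rightarrow> real"
  assumes s: "s \<in> S" "s islimpt S"
    and int: "\<And>x. x \<in> S \<Longrightarrow> k x integrable_on {c..d}"
    and lip: "\<And>x l. x \<in> S \<Longrightarrow> l \<in> {c..d} \<Longrightarrow> \<bar>k x l - k s l\<bar> \<le> K * \<bar>x - s\<bar>"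
    and deriv: "\<And>l. l \<in> {c..d} \<Longrightarrow> ((\<lambda>x. k x l) has_real_derivative k' l) (at s within S)"
  shows "k' integrable_on {c..d}"
    and "((\<lambda>x. integral {c..d} (k x)) has_real_derivative integral {c..d} k') (at s within S)"
proof -
  have integrable: "k' integrable_on {c..d}"
    and quotients: "(\<lambda>n. (integral {c..d} (k (X n)) - integral {c..d} (k s)) / (X n - s)) \<longlonglongrightarrow> integral {c..d} k'"
    if "\<And>n. X n \<in> S - {s}" "X \<longlonglongrightarrow> s" for X
    by (rule tendsto_integral_difference_quotient_sequentially; fact s(1) int lip deriv that)+
  obtain X where "\<And>n. X n \<in> S - {s}" "X \<longlonglongrightarrow> s"
    using s(2) unfolding islimpt_sequential by blast
  then show "k' integrable_on {c..d}"
    by (rule integrable)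
  have "((\<lambda>x. (integral {c..d} (k x) - integral {c..d} (k s)) / (x - s)) \<longlongrightarrow> integral {c..d} k') (at s within S)"
    unfolding tendsto_at_iff_sequentially comp_def using quotients by blast
  then show "((\<lambda>x. integral {c..d} (k x)) has_real_derivative integral {c..d} k') (at s within S)"
    by (simp add: has_field_derivative_iff)
qed

section \<open>Functions sandwiched between the members of a monotone family\<close>

lemma has_integral_sum_consecutive:
  fixes t :: "nat \<Rightarrow> real" and f :: "real \<Rightarrow> 'a::banach"
  assumes "mono t" and "\<And>i. i < n \<Longrightarrow> (f has_integral I i) {t i..t (Suc i)}"
  shows "(f has_integral (\<Sum>i<n. I i)) {t 0..t n}"
  using assms(2)
proof (induction n)
  case 0
  then show ?case
    using has_integral_refl(2) by simp
next
  case (Suc n)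
  then have "(f has_integral (\<Sum>i<n. I i)) {t 0..t n}" "(f has_integral I n) {t n..t (Suc n)}"
    by simp_all
  moreover have "t 0 \<le> t n" "t n \<le> t (Suc n)"
    using \<open>mono t\<close> by (simp_all add: monoD)
  ultimately show ?case
    by (simp add: has_integral_combine)
qed

definition grid :: "real \<Rightarrow> real \<Rightarrow> nat \<Rightarrow> nat \<Rightarrow> real" where
  "grid a b n i = a + real i * ((b - a) / real n)"

definition grid_index :: "real \<Rightarrow> real \<Rightarrow> nat \<Rightarrow> real \<Rightarrow> nat" where
  "grid_index a b n s = nat \<lfloor>(s - a) / ((b - a) / real n)\<rfloor>"

lemma grid_0 [simp]: "grid a b n 0 = a"
  by (simp add: grid_def)

lemma grid_last [simp]: "0 < n \<Longrightarrow> grid a b n n = b"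
  by (simp add: grid_def)

lemma mono_grid: "a \<le> b \<Longrightarrow> mono (grid a b n)"
  unfolding grid_def by (intro monoI add_left_mono mult_right_mono) auto

lemma grid_Suc_diff: "grid a b n (Suc i) - grid a b n i = (b - a) / real n"
  unfolding grid_def by (simp add: distrib_right diff_divide_distrib[symmetric])

lemma grid_mem: "a \<le> b \<Longrightarrow> i \<le> n \<Longrightarrow> 0 < n \<Longrightarrow> grid a b n i \<in> {a..b}"
  using monoD[OF mono_grid, of a b 0 i n] monoD[OF mono_grid, of a b i n n] by simp

lemma grid_index_eq:
  assumes "a < b" "0 < n" "grid a b n i \<le> s" "s < grid a b n (Suc i)"
  shows "grid_index a b n s = i"
proof -
  have "real i \<le> (s - a) / ((b - a) / real n)" "(s - a) / ((b - a) / real n) < real i + 1"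
    using assms by (simp_all add: grid_def field_simps)
  then have "\<lfloor>(s - a) / ((b - a) / real n)\<rfloor> = int i"
    by (intro floor_unique) simp_all
  then show ?thesis
    by (simp add: grid_index_def)
qed

lemma grid_index_bounds:
  assumes "a < b" "0 < n" "a \<le> s"
  shows "grid a b n (grid_index a b n s) \<le> s" "s < grid a b n (Suc (grid_index a b n s))"
proof -
  define w where "w = (b - a) / real n"
  define k where "k = grid_index a b n s"
  have w: "0 < w"
    using assms by (simp add: w_def)
  have "0 \<le> (s - a) / w"
    using assms w by simp
  then have "real k \<le> (s - a) / w" "(s - a) / w < real k + 1"
    unfolding k_def grid_index_def w_def[symmetric] by linarith+
  then have "real k * w \<le> s - a" "s - a < (real k + 1) * w"
    using w by (simp_all add: field_simps)
  then show "grid a b n k \<le> s" "s < grid a b n (Suc k)"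
    by (simp_all add: grid_def w_def[symmetric] algebra_simps)
qed

lemma grid_index_less: "a < b \<Longrightarrow> 0 < n \<Longrightarrow> a \<le> s \<Longrightarrow> s < b \<Longrightarrow> grid_index a b n s < n"
  using grid_index_bounds(1)[of a b n s] monoD[OF mono_grid, of a b n "grid_index a b n s"]
  by (metis grid_last less_le_trans not_le order.strict_iff_not)

lemma grid_index_last: "a < b \<Longrightarrow> 0 < n \<Longrightarrow> grid_index a b n b = n"
  by (simp add: grid_index_def)

lemma sum_grid_le:
  fixes x :: "real \<Rightarrow> real \<Rightarrow> real" and m :: "real \<Rightarrow> real"
  assumes "a \<le> b" "0 < n"
    and x: "\<And>u v. a \<le> u \<Longrightarrow> u \<le> v \<Longrightarrow> v \<le> b \<Longrightarrow> x u v \<le> (v - u) * (m v - m u)"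
  shows "(\<Sum>i<n. x (grid a b n i) (grid a b n (Suc i))) \<le> (b - a) / real n * (m b - m a)"
proof -
  let ?t = "grid a b n"
  have "(\<Sum>i<n. x (?t i) (?t (Suc i))) \<le> (\<Sum>i<n. (b - a) / real n * (m (?t (Suc i)) - m (?t i)))"
  proof (rule sum_mono)
    fix i assume "i \<in> {..<n}"
    then have "?t i \<in> {a..b}" "?t (Suc i) \<in> {a..b}"
      using grid_mem[OF \<open>a \<le> b\<close> _ \<open>0 < n\<close>] by simp_all
    moreover have "?t i \<le> ?t (Suc i)"
      using mono_grid[OF \<open>a \<le> b\<close>] by (simp add: monoD)
    ultimately show "x (?t i) (?t (Suc i)) \<le> (b - a) / real n * (m (?t (Suc i)) - m (?t i))"
      using x[of "?t i" "?t (Suc i)"] by (simp add: grid_Suc_diff)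
  qed
  also have "\<dots> = (b - a) / real n * (\<Sum>i<n. m (?t (Suc i)) - m (?t i))"
    by (rule sum_distrib_left[symmetric])
  also have "\<dots> = (b - a) / real n * (m b - m a)"
    using sum_lessThan_telescope[of "\<lambda>i. m (?t i)" n] \<open>0 < n\<close> by simp
  finally show ?thesis .
qed

lemma has_integral_grid_step:
  fixes f :: "nat \<Rightarrow> real \<Rightarrow> real"
  assumes ab: "a < b" and n: "0 < n" and int: "\<And>i. i < n \<Longrightarrow> f i integrable_on {a..b}"
  shows "((\<lambda>s. f (grid_index a b n s) s) has_integral
           (\<Sum>i<n. integral {grid a b n i..grid a b n (Suc i)} (f i))) {a..b}"
proof -
  let ?t = "grid a b n"
  have "((\<lambda>s. f (grid_index a b n s) s) has_integral integral {?t i..?t (Suc i)} (f i)) {?t i..?t (Suc i)}"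
    if i: "i < n" for i
  proof (rule has_integral_spike_finite[of "{?t (Suc i)}"])
    have "{?t i..?t (Suc i)} \<subseteq> {a..b}"
      using grid_mem[of a b i n] grid_mem[of a b "Suc i" n] ab n i by auto
    then show "(f i has_integral integral {?t i..?t (Suc i)} (f i)) {?t i..?t (Suc i)}"
      using integrable_subinterval_real[OF int[OF i]] by (simp add: integrable_integral)
    show "f (grid_index a b n s) s = f i s" if "s \<in> {?t i..?t (Suc i)} - {?t (Suc i)}" for s
      using that grid_index_eq[OF ab n, of i s] by auto
  qed simp
  then have "((\<lambda>s. f (grid_index a b n s) s) has_integral
           (\<Sum>i<n. integral {?t i..?t (Suc i)} (f i))) {?t 0..?t n}"
    using mono_grid[of a b n] ab by (intro has_integral_sum_consecutive) auto
  then show ?thesis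
    using n by simp
qed

lemma eq_if_increments_dominated:
  fixes E m :: "real \<Rightarrow> real"
  assumes "a \<le> b"
    and incr: "\<And>u v. a \<le> u \<Longrightarrow> u \<le> v \<Longrightarrow> v \<le> b \<Longrightarrow> \<bar>E v - E u\<bar> \<le> (v - u) * (m v - m u)"
  shows "E b = E a"
proof (rule ccontr)
  assume "E b \<noteq> E a"
  then obtain n :: nat where n_large: "(b - a) * (m b - m a) < real n * \<bar>E b - E a\<bar>"
    using ex_less_of_nat_mult[of "\<bar>E b - E a\<bar>"] by auto
  have "0 \<le> (b - a) * (m b - m a)"
    using incr[OF order.refl \<open>a \<le> b\<close> order.refl] abs_ge_zero[of "E b - E a"] by linarith
  with n_large have n: "0 < n"
    by (cases n) auto
  have "\<bar>E b - E a\<bar> = \<bar>\<Sum>i<n. E (grid a b n (Suc i)) - E (grid a b n i)\<bar>"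
    using sum_lessThan_telescope[of "\<lambda>i. E (grid a b n i)" n] n by simp
  also have "\<dots> \<le> (\<Sum>i<n. \<bar>E (grid a b n (Suc i)) - E (grid a b n i)\<bar>)"
    by (rule sum_abs)
  also have "\<dots> \<le> (b - a) / real n * (m b - m a)"
    using incr by (rule sum_grid_le[where x="\<lambda>u v. \<bar>E v - E u\<bar>", OF \<open>a \<le> b\<close> n])
  finally have "\<bar>E b - E a\<bar> \<le> (b - a) * (m b - m a) / real n"
    by simp
  then have "real n * \<bar>E b - E a\<bar> \<le> (b - a) * (m b - m a)"
    using n by (simp add: le_divide_eq mult.commute)
  with n_large show False
    by simp
qed

context
  fixes \<psi> :: "real \<Rightarrow> real \<Rightarrow> real" and \<Psi> m :: "real \<Rightarrow> real" and a b :: real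
  assumes int: "\<And>u. u \<in> {a..b} \<Longrightarrow> \<psi> u integrable_on {a..b}"
    and sandwich: "\<And>u s v. a \<le> u \<Longrightarrow> u \<le> s \<Longrightarrow> s \<le> v \<Longrightarrow> v \<le> b \<Longrightarrow> \<psi> u s \<le> \<Psi> s \<and> \<Psi> s \<le> \<psi> v s"
    and gap: "\<And>u s v. a \<le> u \<Longrightarrow> u \<le> s \<Longrightarrow> s \<le> v \<Longrightarrow> v \<le> b \<Longrightarrow> \<psi> v s - \<psi> u s \<le> m v - m u"
begin

lemma integrable_family_subinterval: "w \<in> {a..b} \<Longrightarrow> a \<le> u \<Longrightarrow> v \<le> b \<Longrightarrow> \<psi> w integrable_on {u..v}"
  using int by (rule integrable_subinterval_real) auto

lemma integral_family_increment_le: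
  assumes "a \<le> u" "u \<le> v" "v \<le> b"
  shows "integral {u..v} (\<psi> v) - integral {u..v} (\<psi> u) \<le> (v - u) * (m v - m u)"
proof -
  have "integral {u..v} (\<psi> v) - integral {u..v} (\<psi> u) = integral {u..v} (\<lambda>s. \<psi> v s - \<psi> u s)"
    using assms by (simp add: integral_diff integrable_family_subinterval)
  also have "\<dots> \<le> integral {u..v} (\<lambda>s. m v - m u)"
    using assms gap by (intro integral_le integrable_diff integrable_family_subinterval) auto
  finally show ?thesis
    using assms by (simp add: mult.commute)
qed

lemma sandwich_step_functions:
  assumes ab: "a < b" and n: "0 < n"
  obtains lo up where
    "(lo has_integral (\<Sum>i<n. integral {grid a b n i..grid a b n (Suc i)} (\<psi> (grid a b n i)))) {a..b}"
    "(up has_integral (\<Sum>i<n. integral {grid a b n i..grid a b n (Suc i)} (\<psi> (grid a b n (Suc i))))) {a..b}"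
    "\<And>s. s \<in> {a..b} \<Longrightarrow> lo s \<le> \<Psi> s \<and> \<Psi> s \<le> up s"
proof
  let ?t = "grid a b n" and ?k = "grid_index a b n"
  have t_mem: "?t i \<in> {a..b}" if "i \<le> n" for i
    using grid_mem[OF less_imp_le[OF ab] that n] .
  show "((\<lambda>s. \<psi> (?t (?k s)) s) has_integral (\<Sum>i<n. integral {?t i..?t (Suc i)} (\<psi> (?t i)))) {a..b}"
    using t_mem int by (intro has_integral_grid_step[where f="\<lambda>i. \<psi> (?t i)"] ab n) simp
  have "((\<lambda>s. \<psi> (?t (min n (Suc (?k s)))) s) has_integral
      (\<Sum>i<n. integral {?t i..?t (Suc i)} (\<psi> (?t (min n (Suc i)))))) {a..b}"
    using t_mem int by (intro has_integral_grid_step[where f="\<lambda>i. \<psi> (?t (min n (Suc i)))"] ab n) simp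
  moreover have "(\<Sum>i<n. integral {?t i..?t (Suc i)} (\<psi> (?t (min n (Suc i)))))
      = (\<Sum>i<n. integral {?t i..?t (Suc i)} (\<psi> (?t (Suc i))))"
    by (rule sum.cong) auto
  ultimately show "((\<lambda>s. \<psi> (?t (min n (Suc (?k s)))) s) has_integral
      (\<Sum>i<n. integral {?t i..?t (Suc i)} (\<psi> (?t (Suc i))))) {a..b}"
    by simp
  fix s assume s: "s \<in> {a..b}"
  show "\<psi> (?t (?k s)) s \<le> \<Psi> s \<and> \<Psi> s \<le> \<psi> (?t (min n (Suc (?k s)))) s"
  proof (cases "s = b")
    case True
    then show ?thesis
      using sandwich[of b b b] ab n by (simp add: grid_index_last)
  next
    case False
    then have "?k s < n"
      using grid_index_less[OF ab n] s by simp
    then show ?thesis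
      using sandwich[of "?t (?k s)" s "?t (Suc (?k s))"] grid_index_bounds[OF ab n, of s]
        t_mem[of "?k s"] t_mem[of "Suc (?k s)"] s
      by simp
  qed
qed

lemma integrable_sandwiched_family:
  assumes "a \<le> b"
  shows "\<Psi> integrable_on {a..b}"
proof (cases "a = b")
  case True
  then show ?thesis
    using has_integral_refl(2) by (auto simp: integrable_on_def)
next
  case False
  with \<open>a \<le> b\<close> have ab: "a < b" by simp
  have "0 \<le> (b - a) * (m b - m a)"
    using sandwich[of a a b] gap[of a a b] ab by simp
  show ?thesis
  proof (rule integrable_straddle)
    fix e :: real
    assume "0 < e"
    then obtain n :: nat where n_large: "(b - a) * (m b - m a) < real n * e"
      using ex_less_of_nat_mult by blast
    with \<open>0 \<le> (b - a) * (m b - m a)\<close> have n: "0 < n"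
      by (cases n) auto
    define SL where "SL = (\<Sum>i<n. integral {grid a b n i..grid a b n (Suc i)} (\<psi> (grid a b n i)))"
    define SU where "SU = (\<Sum>i<n. integral {grid a b n i..grid a b n (Suc i)} (\<psi> (grid a b n (Suc i))))"
    obtain lo up where lo: "(lo has_integral SL) {a..b}" and up: "(up has_integral SU) {a..b}"
      and bounds: "\<And>s. s \<in> {a..b} \<Longrightarrow> lo s \<le> \<Psi> s \<and> \<Psi> s \<le> up s"
      using sandwich_step_functions[OF ab n] unfolding SL_def SU_def by blast
    have "SU - SL \<le> (b - a) / real n * (m b - m a)"
      unfolding SU_def SL_def sum_subtractf[symmetric] using integral_family_increment_le
      by (rule sum_grid_le[where x="\<lambda>u v. integral {u..v} (\<psi> v) - integral {u..v} (\<psi> u)", OF \<open>a \<le> b\<close> n])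
    also have "\<dots> < e"
      using n_large n by (simp add: divide_less_eq mult.commute)
    finally have "SU - SL < e" .
    moreover have "SL \<le> SU"
      using bounds by (intro has_integral_le[OF lo up]) force
    ultimately show "\<exists>g h i j. (g has_integral i) {a..b} \<and> (h has_integral j) {a..b} \<and>
        \<bar>i - j\<bar> < e \<and> (\<forall>s\<in>{a..b}. g s \<le> \<Psi> s \<and> \<Psi> s \<le> h s)"
      using lo up bounds by (intro exI[of _ lo] exI[of _ up] exI) auto
  qed
qed

lemma integral_eq_if_sandwiched_family:
  fixes V :: "real \<Rightarrow> real"
  assumes "a \<le> b"
    and V: "\<And>u v. a \<le> u \<Longrightarrow> u \<le> v \<Longrightarrow> v \<le> b \<Longrightarrow>
              integral {u..v} (\<psi> u) \<le> V v - V u \<and> V v - V u \<le> integral {u..v} (\<psi> v)"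
  shows "integral {a..b} \<Psi> = V b - V a"
proof -
  have \<Psi>_int: "\<Psi> integrable_on {u..v}" if "a \<le> u" "v \<le> b" for u v
    using integrable_sandwiched_family[OF \<open>a \<le> b\<close>] by (rule integrable_subinterval_real) (use that in auto)
  \<comment> \<open>Both \<open>V\<close> and the integral of \<open>\<Psi>\<close> have increments squeezed between the same two integrals.\<close>
  define E where "E x = V x - integral {a..x} \<Psi>" for x
  have "\<bar>E v - E u\<bar> \<le> (v - u) * (m v - m u)" if uv: "a \<le> u" "u \<le> v" "v \<le> b" for u v
  proof -
    have "integral {a..u} \<Psi> + integral {u..v} \<Psi> = integral {a..v} \<Psi>"
      using uv \<Psi>_int[of a v] by (intro Henstock_Kurzweil_Integration.integral_combine) auto
    then have E_diff: "E v - E u = (V v - V u) - integral {u..v} \<Psi>"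
      by (simp add: E_def)
    have sw: "\<psi> u s \<le> \<Psi> s \<and> \<Psi> s \<le> \<psi> v s" if "s \<in> {u..v}" for s
      using sandwich[of u s v] that uv by auto
    have "integral {u..v} (\<psi> u) \<le> integral {u..v} \<Psi>"
      using sw by (intro integral_le[OF integrable_family_subinterval \<Psi>_int]) (use uv in auto)
    moreover have "integral {u..v} \<Psi> \<le> integral {u..v} (\<psi> v)"
      using sw by (intro integral_le[OF \<Psi>_int integrable_family_subinterval]) (use uv in auto)
    ultimately show ?thesis
      using V[OF uv] integral_family_increment_le[OF uv] unfolding E_diff abs_le_iff
      by (intro conjI) linarith+
  qed
  then have "E b = E a"
    by (rule eq_if_increments_dominated[of a b E m, OF \<open>a \<le> b\<close>])
  then show ?thesis
    by (simp add: E_def)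
qed

end

section \<open>The screening model\<close>

lemma retention_dR_bounds: "retention L R \<Longrightarrow> l \<in> {0..L} \<Longrightarrow> 0 \<le> dR L R l \<and> dR L R l \<le> 1"
  by (simp add: retention_def)

lemma retention_has_integral_dR:
  assumes "0 < L" "retention L R"
  shows "(dR L R has_integral R L) {0..L}"
proof -
  have "(dR L R has_integral R L - R 0) {0..L}"
    unfolding dR_def using assms
    by (intro fundamental_theorem_of_calculus) (auto simp: retention_def vector_derivative_works[symmetric])
  then show ?thesis
    using assms(2) by (simp add: retention_def)
qed

lemma dR_ident: "0 < L \<Longrightarrow> l \<in> {0..L} \<Longrightarrow> dR L (\<lambda>l. l) l = 1"
  unfolding dR_def by (rule vector_derivative_within_closed_interval) auto

lemma retention_ident: "0 < L \<Longrightarrow> retention L (\<lambda>l. l)"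
  unfolding retention_def using dR_ident[of L]
  by (auto intro: differentiableI_vector[OF has_vector_derivative_id])

locale yaari_model =
  fixes g F :: "real \<Rightarrow> real \<Rightarrow> real" and thl thh L \<delta> KF Kg :: real
  assumes types_nontrivial: "thl < thh" and L_pos: "0 < L"
    and F_range: "\<And>\<theta> l. \<theta> \<in> {thl..thh} \<Longrightarrow> F \<theta> l \<in> {0..1}"
    and F_continuous: "\<And>\<theta>. \<theta> \<in> {thl..thh} \<Longrightarrow> continuous_on UNIV (F \<theta>)"
    and F_lipschitz: "\<And>\<theta> \<theta>' l. \<theta> \<in> {thl..thh} \<Longrightarrow> \<theta>' \<in> {thl..thh} \<Longrightarrow> \<bar>F \<theta> l - F \<theta>' l\<bar> \<le> KF * \<bar>\<theta> - \<theta>'\<bar>"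
    and F_differentiable: "\<And>l \<theta>. \<theta> \<in> {thl..thh} \<Longrightarrow> (\<lambda>s. F s l) differentiable (at \<theta> within {thl..thh})"
    and F_decreasing: "\<And>l \<theta>. \<theta> \<in> {thl..thh} \<Longrightarrow> vector_derivative (\<lambda>s. F s l) (at \<theta> within {thl..thh}) \<le> 0"
    and g_distortion: "\<And>\<theta>. \<theta> \<in> {thl..thh} \<Longrightarrow> distortion (g \<theta>)"
    and g_differentiable: "\<And>\<theta> t. \<theta> \<in> {thl..thh} \<Longrightarrow> t \<in> {0..1} \<Longrightarrow> g \<theta> differentiable (at t within {0..1})"
    and g_deriv_le: "\<And>\<theta> t. \<theta> \<in> {thl..thh} \<Longrightarrow> t \<in> {0..1} \<Longrightarrow> vector_derivative (g \<theta>) (at t within {0..1}) \<le> \<delta>"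
    and g_differentiable_type: "\<And>\<theta> t. \<theta> \<in> {thl..thh} \<Longrightarrow> t \<in> {0..1} \<Longrightarrow> (\<lambda>s. g s t) differentiable (at \<theta> within {thl..thh})"
    and g_lipschitz_type: "\<And>t \<theta> \<theta>'. t \<in> {0..1} \<Longrightarrow> \<theta> \<in> {thl..thh} \<Longrightarrow> \<theta>' \<in> {thl..thh} \<Longrightarrow> \<bar>g \<theta> t - g \<theta>' t\<bar> \<le> Kg * \<bar>\<theta> - \<theta>'\<bar>"
    and g_decreasing_type: "\<And>\<theta> t. \<theta> \<in> {thl..thh} \<Longrightarrow> t \<in> {0<..<1} \<Longrightarrow> vector_derivative (\<lambda>s. g s t) (at \<theta> within {thl..thh}) \<le> 0"
begin

text \<open>In the notation of the paper, \<open>dg_type s l\<close> is \<open>\<partial>g\<^sub>s/\<partial>s (F\<^sub>s(l))\<close>,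
  \<open>dg_loss s l\<close> is \<open>g\<^sub>s'(F\<^sub>s(l)) \<partial>F\<^sub>s(l)/\<partial>s\<close>, and \<open>utility_slope R s\<close> is the derivative in the type \<open>s\<close>
  of the utility that type \<open>s\<close> derives from the retention function \<open>R\<close>.\<close>

definition dg_type :: "real \<Rightarrow> real \<Rightarrow> real" where
  "dg_type s l = vector_derivative (\<lambda>u. g u (F s l)) (at s within {thl..thh})"

definition dg_loss :: "real \<Rightarrow> real \<Rightarrow> real" where
  "dg_loss s l = vector_derivative (g s) (at (F s l) within {0..1}) * vector_derivative (\<lambda>u. F u l) (at s within {thl..thh})"

definition utility_slope :: "(real \<Rightarrow> real) \<Rightarrow> real \<Rightarrow> real" where
  "utility_slope R s = integral {0..L} (\<lambda>l. (dg_type s l + dg_loss s l) * dR L R l)"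

definition distorted_retention :: "(real \<Rightarrow> real) \<Rightarrow> real \<Rightarrow> real \<Rightarrow> real" where
  "distorted_retention R x y = integral {0..L} (\<lambda>l. g x (F y l) * dR L R l)"

lemma type_islimpt: "s \<in> {thl..thh} \<Longrightarrow> s islimpt {thl..thh}"
  using types_nontrivial by simp

lemma g_has_real_derivative:
  assumes "\<theta> \<in> {thl..thh}" "t \<in> {0..1}"
  shows "(g \<theta> has_real_derivative vector_derivative (g \<theta>) (at t within {0..1})) (at t within {0..1})"
  using g_differentiable[OF assms] vector_derivative_works has_real_derivative_iff_has_vector_derivative by blast

lemma g_deriv_nonneg:
  assumes "\<theta> \<in> {thl..thh}" "t \<in> {0..1}"
  shows "0 \<le> vector_derivative (g \<theta>) (at t within {0..1})"
  using g_distortion[OF assms(1)] assms(2)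
  by (intro DERIV_nonneg_if_mono_on[OF _ g_has_real_derivative[OF assms]]) (auto simp: distortion_def)

lemma delta_nonneg: "0 \<le> \<delta>"
  using g_deriv_nonneg[of thl 0] g_deriv_le[of thl 0] types_nontrivial by force

lemma g_lipschitz_prob:
  assumes "\<theta> \<in> {thl..thh}" "t \<in> {0..1}" "t' \<in> {0..1}"
  shows "\<bar>g \<theta> t - g \<theta> t'\<bar> \<le> \<delta> * \<bar>t - t'\<bar>"
  using field_differentiable_bound[OF convex_real_interval(5) g_has_real_derivative[OF assms(1)] _ assms(2,3)]
    g_deriv_nonneg[OF assms(1)] g_deriv_le[OF assms(1)] by force

lemma has_real_derivative_dg_type:
  assumes "s \<in> {thl..thh}"
  shows "((\<lambda>u. g u (F s l)) has_real_derivative dg_type s l) (at s within {thl..thh})"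
  using g_differentiable_type[OF assms F_range[OF assms]] unfolding dg_type_def
  using vector_derivative_works has_real_derivative_iff_has_vector_derivative by blast

lemma has_real_derivative_dg_loss:
  assumes "s \<in> {thl..thh}"
  shows "((\<lambda>u. g s (F u l)) has_real_derivative dg_loss s l) (at s within {thl..thh})"
proof -
  have F': "((\<lambda>u. F u l) has_vector_derivative vector_derivative (\<lambda>u. F u l) (at s within {thl..thh}))
      (at s within {thl..thh})"
    using F_differentiable[OF assms] vector_derivative_works by blast
  have "(g s has_vector_derivative vector_derivative (g s) (at (F s l) within {0..1}))
      (at (F s l) within {0..1})"
    using g_has_real_derivative[OF assms F_range[OF assms]] by (simp add: has_real_derivative_iff_has_vector_derivative)
  then have "(g s has_vector_derivative vector_derivative (g s) (at (F s l) within {0..1}))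
      (at (F s l) within (\<lambda>u. F u l) ` {thl..thh})"
    by (rule has_vector_derivative_within_subset) (use F_range in auto)
  from vector_diff_chain_within[OF F' this] show ?thesis
    by (simp add: dg_loss_def comp_def mult.commute has_real_derivative_iff_has_vector_derivative)
qed

lemma abs_dg_type_le: "s \<in> {thl..thh} \<Longrightarrow> \<bar>dg_type s l\<bar> \<le> Kg"
  by (rule DERIV_abs_le_if_lipschitz[OF has_real_derivative_dg_type type_islimpt])
    (use g_lipschitz_type F_range in auto)

lemma abs_dg_loss_le:
  assumes "s \<in> {thl..thh}"
  shows "\<bar>dg_loss s l\<bar> \<le> \<delta> * KF"
proof (rule DERIV_abs_le_if_lipschitz[OF has_real_derivative_dg_loss[OF assms] type_islimpt[OF assms]])
  fix y assume y: "y \<in> {thl..thh}"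
  have "\<bar>g s (F y l) - g s (F s l)\<bar> \<le> \<delta> * \<bar>F y l - F s l\<bar>"
    using g_lipschitz_prob[OF assms F_range[OF y] F_range[OF assms]] .
  also have "\<dots> \<le> \<delta> * (KF * \<bar>y - s\<bar>)"
    using F_lipschitz[OF y assms] delta_nonneg by (rule mult_left_mono)
  finally show "\<bar>g s (F y l) - g s (F s l)\<bar> \<le> \<delta> * KF * \<bar>y - s\<bar>"
    by (simp add: mult.assoc)
qed

lemma dg_type_nonpos:
  assumes "s \<in> {thl..thh}"
  shows "dg_type s l \<le> 0"
proof (cases "F s l \<in> {0<..<1}")
  case True
  then show ?thesis
    unfolding dg_type_def by (rule g_decreasing_type[OF assms])
next
  case False
  \<comment> \<open>At the probabilities 0 and 1 every distortion is pinned, so the type has no effect.\<close>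
  with F_range[OF assms, of l] have "F s l \<in> {0, 1}"
    by auto
  then have "g y (F s l) = g s (F s l)" if "y \<in> {thl..thh}" for y
    using g_distortion[OF that] g_distortion[OF assms] by (auto simp: distortion_def)
  then have "\<bar>dg_type s l\<bar> \<le> 0"
    by (intro DERIV_abs_le_if_lipschitz[OF has_real_derivative_dg_type[OF assms] type_islimpt[OF assms]]) simp
  then show ?thesis
    by simp
qed

lemma dg_loss_nonpos: "s \<in> {thl..thh} \<Longrightarrow> dg_loss s l \<le> 0"
  unfolding dg_loss_def using g_deriv_nonneg[OF _ F_range] F_decreasing
  by (simp add: mult_nonneg_nonpos)

lemma continuous_on_distorted:
  assumes "x \<in> {thl..thh}" "y \<in> {thl..thh}"
  shows "continuous_on {0..L} (\<lambda>l. g x (F y l))"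
proof (rule continuous_on_compose2[of "{0..1}" "g x" "{0..L}" "F y"])
  show "continuous_on {0..1} (g x)"
    using g_differentiable[OF assms(1)]
    by (auto simp: continuous_on_eq_continuous_within intro: differentiable_imp_continuous_within)
  show "continuous_on {0..L} (F y)"
    using F_continuous[OF assms(2)] by (rule continuous_on_subset) simp
qed (use F_range[OF assms(2)] in auto)

lemma integrable_distorted_dR:
  assumes "retention L R" "x \<in> {thl..thh}" "y \<in> {thl..thh}"
  shows "(\<lambda>l. g x (F y l) * dR L R l) integrable_on {0..L}"
proof -
  have cont: "continuous_on {0..L} (\<lambda>l. g x (F y l))"
    by (rule continuous_on_distorted[OF assms(2,3)])
  have "dR L R absolutely_integrable_on {0..L}"
    using retention_has_integral_dR[OF L_pos assms(1)] retention_dR_bounds[OF assms(1)]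
    by (intro nonnegative_absolutely_integrable_1) (auto simp: has_integral_integrable)
  then have "(\<lambda>l. g x (F y l) * dR L R l) absolutely_integrable_on {0..L}"
    using cont by (intro absolutely_integrable_bounded_measurable_product_real
        continuous_imp_measurable_on_sets_lebesgue compact_imp_bounded compact_continuous_image) auto
  then show ?thesis
    by (simp add: absolutely_integrable_on_def)
qed

lemma abs_integral_distorted_diff_le:
  assumes R: "retention L R" and xy: "x \<in> {thl..thh}" "y \<in> {thl..thh}" "x' \<in> {thl..thh}" "y' \<in> {thl..thh}"
    and B: "\<And>l. l \<in> {0..L} \<Longrightarrow> \<bar>g x (F y l) - g x' (F y' l)\<bar> \<le> B"
  shows "\<bar>integral {0..L} (\<lambda>l. g x (F y l) * dR L R l) - integral {0..L} (\<lambda>l. g x' (F y' l) * dR L R l)\<bar> \<le> B * L"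
proof -
  let ?f = "\<lambda>l. (g x (F y l) - g x' (F y' l)) * dR L R l"
  have "(?f has_integral integral {0..L} (\<lambda>l. g x (F y l) * dR L R l) - integral {0..L} (\<lambda>l. g x' (F y' l) * dR L R l)) {0..L}"
    using has_integral_diff[OF integrable_integral[OF integrable_distorted_dR[OF R xy(1,2)]]
        integrable_integral[OF integrable_distorted_dR[OF R xy(3,4)]]]
    by (simp add: left_diff_distrib)
  moreover have "\<bar>?f l\<bar> \<le> B" if "l \<in> {0..L}" for l
  proof -
    have "\<bar>?f l\<bar> \<le> \<bar>g x (F y l) - g x' (F y' l)\<bar>"
      using retention_dR_bounds[OF R that] by (simp add: abs_mult mult_left_le)
    with B[OF that] show ?thesis
      by linarith
  qed
  moreover have "0 \<le> B"
    using order_trans[OF abs_ge_zero B[of 0]] L_pos by simp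
  ultimately show ?thesis
    using has_integral_bound[of B ?f _ 0 L] L_pos by simp
qed

lemma Uag_eq_distorted_retention:
  assumes "retention L R" "\<theta> \<in> {thl..thh}"
  shows "Uag L (g \<theta>) (F \<theta>) R p = - p - R L + distorted_retention R \<theta> \<theta>"
proof -
  have "integral {0..L} (\<lambda>l. (1 - g \<theta> (F \<theta> l)) * dR L R l)
      = integral {0..L} (\<lambda>l. dR L R l - g \<theta> (F \<theta> l) * dR L R l)"
    by (simp add: algebra_simps)
  also have "\<dots> = R L - distorted_retention R \<theta> \<theta>"
    unfolding distorted_retention_def
    using retention_has_integral_dR[OF L_pos assms(1)] integrable_distorted_dR[OF assms(1,2,2)]
    by (simp add: integral_diff has_integral_integrable integral_unique)
  finally show ?thesis
    by (simp add: Uag_def)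
qed

lemma distorted_retention_lipschitz_type:
  assumes "retention L R" "x \<in> {thl..thh}" "x' \<in> {thl..thh}" "y \<in> {thl..thh}"
  shows "\<bar>distorted_retention R x y - distorted_retention R x' y\<bar> \<le> Kg * \<bar>x - x'\<bar> * L"
  unfolding distorted_retention_def
  by (rule abs_integral_distorted_diff_le[OF assms(1,2,4,3,4) g_lipschitz_type[OF F_range[OF assms(4)] assms(2,3)]])

lemma distorted_retention_lipschitz_loss:
  assumes "retention L R" "x \<in> {thl..thh}" "y \<in> {thl..thh}" "y' \<in> {thl..thh}"
  shows "\<bar>distorted_retention R x y - distorted_retention R x y'\<bar> \<le> \<delta> * (KF * \<bar>y - y'\<bar>) * L"
  unfolding distorted_retention_def
proof (rule abs_integral_distorted_diff_le[OF assms(1,2,3,2,4)])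
  fix l
  show "\<bar>g x (F y l) - g x (F y' l)\<bar> \<le> \<delta> * (KF * \<bar>y - y'\<bar>)"
    using order_trans[OF g_lipschitz_prob[OF assms(2) F_range[OF assms(3)] F_range[OF assms(4)]]
        mult_left_mono[OF F_lipschitz[OF assms(3,4)] delta_nonneg]] .
qed

lemma DERIV_distorted_retention_type:
  assumes R: "retention L R" and s: "s \<in> {thl..thh}"
  shows "(\<lambda>l. dg_type s l * dR L R l) integrable_on {0..L}"
    and "((\<lambda>x. distorted_retention R x s) has_real_derivative
          integral {0..L} (\<lambda>l. dg_type s l * dR L R l)) (at s within {thl..thh})"
proof -
  have lip: "\<bar>g x (F s l) * dR L R l - g s (F s l) * dR L R l\<bar> \<le> Kg * \<bar>x - s\<bar>"
    if "x \<in> {thl..thh}" "l \<in> {0..L}" for x l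
  proof -
    have "\<bar>g x (F s l) * dR L R l - g s (F s l) * dR L R l\<bar> \<le> \<bar>g x (F s l) - g s (F s l)\<bar>"
      using retention_dR_bounds[OF R that(2)] by (simp add: abs_mult mult_left_le left_diff_distrib[symmetric])
    also have "\<dots> \<le> Kg * \<bar>x - s\<bar>"
      by (rule g_lipschitz_type[OF F_range[OF s] that(1) s])
    finally show ?thesis .
  qed
  show "(\<lambda>l. dg_type s l * dR L R l) integrable_on {0..L}"
    and "((\<lambda>x. distorted_retention R x s) has_real_derivative
          integral {0..L} (\<lambda>l. dg_type s l * dR L R l)) (at s within {thl..thh})"
    unfolding distorted_retention_def
    using DERIV_integral_parametric[where k="\<lambda>x l. g x (F s l) * dR L R l",
        OF s type_islimpt[OF s] integrable_distorted_dR[OF R _ s] lip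
        DERIV_cmult_right[OF has_real_derivative_dg_type[OF s]]] by auto
qed

lemma DERIV_distorted_retention_loss:
  assumes R: "retention L R" and s: "s \<in> {thl..thh}"
  shows "(\<lambda>l. dg_loss s l * dR L R l) integrable_on {0..L}"
    and "((\<lambda>y. distorted_retention R s y) has_real_derivative
          integral {0..L} (\<lambda>l. dg_loss s l * dR L R l)) (at s within {thl..thh})"
proof -
  have lip: "\<bar>g s (F y l) * dR L R l - g s (F s l) * dR L R l\<bar> \<le> (\<delta> * KF) * \<bar>y - s\<bar>"
    if "y \<in> {thl..thh}" "l \<in> {0..L}" for y l
  proof -
    have "\<bar>g s (F y l) * dR L R l - g s (F s l) * dR L R l\<bar> \<le> \<bar>g s (F y l) - g s (F s l)\<bar>"
      using retention_dR_bounds[OF R that(2)] by (simp add: abs_mult mult_left_le left_diff_distrib[symmetric])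
    also have "\<dots> \<le> \<delta> * \<bar>F y l - F s l\<bar>"
      by (rule g_lipschitz_prob[OF s F_range[OF that(1)] F_range[OF s]])
    also have "\<dots> \<le> \<delta> * (KF * \<bar>y - s\<bar>)"
      by (rule mult_left_mono[OF F_lipschitz[OF that(1) s] delta_nonneg])
    finally show ?thesis
      by (simp add: mult.assoc)
  qed
  show "(\<lambda>l. dg_loss s l * dR L R l) integrable_on {0..L}"
    and "((\<lambda>y. distorted_retention R s y) has_real_derivative
          integral {0..L} (\<lambda>l. dg_loss s l * dR L R l)) (at s within {thl..thh})"
    unfolding distorted_retention_def
    using DERIV_integral_parametric[where k="\<lambda>y l. g s (F y l) * dR L R l",
        OF s type_islimpt[OF s] integrable_distorted_dR[OF R s] lip
        DERIV_cmult_right[OF has_real_derivative_dg_loss[OF s]]] by auto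
qed

lemma integrable_marginal_dR:
  assumes "retention L R" "s \<in> {thl..thh}"
  shows "(\<lambda>l. (dg_type s l + dg_loss s l) * dR L R l) integrable_on {0..L}"
  using integrable_add[OF DERIV_distorted_retention_type(1)[OF assms] DERIV_distorted_retention_loss(1)[OF assms]]
  by (simp add: distrib_right)

theorem has_integral_utility_slope:
  assumes R: "retention L R" and ab: "a \<in> {thl..thh}" "b \<in> {thl..thh}" "a \<le> b"
  shows "(utility_slope R has_integral Uag L (g b) (F b) R p - Uag L (g a) (F a) R p) {a..b}"
proof -
  have sub: "{a..b} \<subseteq> {thl..thh}"
    using ab by auto
  let ?C = "max Kg (\<delta> * KF) * L"
  have diagonal: "((\<lambda>s. integral {0..L} (\<lambda>l. dg_type s l * dR L R l) + integral {0..L} (\<lambda>l. dg_loss s l * dR L R l))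
      has_integral distorted_retention R b b - distorted_retention R a a) {a..b}"
  proof (rule has_integral_diagonal[where \<phi>="distorted_retention R" and C="?C"])
    show "a \<le> b"
      by (fact ab(3))
    show "\<bar>distorted_retention R x y - distorted_retention R x' y\<bar> \<le> ?C * \<bar>x - x'\<bar>"
      if "x \<in> {a..b}" "x' \<in> {a..b}" "y \<in> {a..b}" for x x' y
    proof -
      have "Kg * \<bar>x - x'\<bar> * L \<le> ?C * \<bar>x - x'\<bar>"
        using mult_right_mono[OF max.cobounded1[of Kg "\<delta> * KF"], of "\<bar>x - x'\<bar> * L"] L_pos
        by (simp add: ac_simps)
      with distorted_retention_lipschitz_type[OF R, of x x' y] that sub show ?thesis
        by auto
    qed
    show "\<bar>distorted_retention R x y - distorted_retention R x y'\<bar> \<le> ?C * \<bar>y - y'\<bar>"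
      if "x \<in> {a..b}" "y \<in> {a..b}" "y' \<in> {a..b}" for x y y'
    proof -
      have "\<delta> * (KF * \<bar>y - y'\<bar>) * L \<le> ?C * \<bar>y - y'\<bar>"
        using mult_right_mono[OF max.cobounded2[of "\<delta> * KF" Kg], of "\<bar>y - y'\<bar> * L"] L_pos
        by (simp add: ac_simps)
      with distorted_retention_lipschitz_loss[OF R, of x y y'] that sub show ?thesis
        by auto
    qed
    fix s assume "s \<in> {a..b}"
    with sub have s: "s \<in> {thl..thh}"
      by auto
    show "((\<lambda>x. distorted_retention R x s) has_real_derivative integral {0..L} (\<lambda>l. dg_type s l * dR L R l))
        (at s within {a..b})"
      by (rule DERIV_subset[OF DERIV_distorted_retention_type(2)[OF R s] sub])
    show "((\<lambda>y. distorted_retention R s y) has_real_derivative integral {0..L} (\<lambda>l. dg_loss s l * dR L R l))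
        (at s within {a..b})"
      by (rule DERIV_subset[OF DERIV_distorted_retention_loss(2)[OF R s] sub])
  qed
  have slope: "integral {0..L} (\<lambda>l. dg_type s l * dR L R l) + integral {0..L} (\<lambda>l. dg_loss s l * dR L R l)
      = utility_slope R s" if "s \<in> {a..b}" for s
    using integral_add[OF DERIV_distorted_retention_type(1)[OF R] DERIV_distorted_retention_loss(1)[OF R]] that sub
    by (auto simp: utility_slope_def distrib_right)
  show ?thesis
    using diagonal has_integral_cong[of "{a..b}", OF slope]
      Uag_eq_distorted_retention[OF R ab(1)] Uag_eq_distorted_retention[OF R ab(2)] by simp
qed

lemma utility_slope_antimono:
  assumes R: "retention L R\<^sub>1" "retention L R\<^sub>2" and s: "s \<in> {thl..thh}"
    and le: "\<And>l. l \<in> {0..L} \<Longrightarrow> dR L R\<^sub>1 l \<le> dR L R\<^sub>2 l"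
  shows "utility_slope R\<^sub>2 s \<le> utility_slope R\<^sub>1 s"
  unfolding utility_slope_def
proof (rule integral_le[OF integrable_marginal_dR[OF R(2) s] integrable_marginal_dR[OF R(1) s]])
  fix l assume "l \<in> {0..L}"
  have "dg_type s l + dg_loss s l \<le> 0"
    using dg_type_nonpos[OF s] dg_loss_nonpos[OF s] by (rule add_nonpos_nonpos)
  with le[OF \<open>l \<in> {0..L}\<close>]
  show "(dg_type s l + dg_loss s l) * dR L R\<^sub>2 l \<le> (dg_type s l + dg_loss s l) * dR L R\<^sub>1 l"
    by (rule mult_left_mono_neg)
qed

lemma utility_slope_diff_le:
  assumes R: "retention L R\<^sub>1" "retention L R\<^sub>2" and s: "s \<in> {thl..thh}"
    and le: "\<And>l. l \<in> {0..L} \<Longrightarrow> dR L R\<^sub>2 l \<le> dR L R\<^sub>1 l"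
  shows "utility_slope R\<^sub>2 s - utility_slope R\<^sub>1 s \<le> (Kg + \<delta> * KF) * (R\<^sub>1 L - R\<^sub>2 L)"
proof -
  let ?D = "\<lambda>l. dg_type s l + dg_loss s l"
  have dR_int: "dR L R\<^sub>i integrable_on {0..L}" "integral {0..L} (dR L R\<^sub>i) = R\<^sub>i L"
    if "retention L R\<^sub>i" for R\<^sub>i
    using retention_has_integral_dR[OF L_pos that] by (auto simp: has_integral_integrable integral_unique)
  have "utility_slope R\<^sub>2 s - utility_slope R\<^sub>1 s = integral {0..L} (\<lambda>l. ?D l * (dR L R\<^sub>2 l - dR L R\<^sub>1 l))"
    unfolding utility_slope_def
    using integral_diff[OF integrable_marginal_dR[OF R(2) s] integrable_marginal_dR[OF R(1) s]]
    by (simp add: right_diff_distrib)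
  also have "\<dots> \<le> integral {0..L} (\<lambda>l. (Kg + \<delta> * KF) * (dR L R\<^sub>1 l - dR L R\<^sub>2 l))"
  proof (rule integral_le)
    show "(\<lambda>l. ?D l * (dR L R\<^sub>2 l - dR L R\<^sub>1 l)) integrable_on {0..L}"
      using integrable_diff[OF integrable_marginal_dR[OF R(2) s] integrable_marginal_dR[OF R(1) s]]
      by (simp add: right_diff_distrib)
    show "(\<lambda>l. (Kg + \<delta> * KF) * (dR L R\<^sub>1 l - dR L R\<^sub>2 l)) integrable_on {0..L}"
      using integrable_on_cmult_left[OF integrable_diff[OF dR_int(1)[OF R(1)] dR_int(1)[OF R(2)]], of "Kg + \<delta> * KF"]
      by simp
    fix l assume "l \<in> {0..L}"
    have "- (Kg + \<delta> * KF) \<le> ?D l"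
      using abs_dg_type_le[OF s, of l] abs_dg_loss_le[OF s, of l] by linarith
    moreover have "dR L R\<^sub>2 l - dR L R\<^sub>1 l \<le> 0"
      using le[OF \<open>l \<in> {0..L}\<close>] by simp
    ultimately have "?D l * (dR L R\<^sub>2 l - dR L R\<^sub>1 l) \<le> - (Kg + \<delta> * KF) * (dR L R\<^sub>2 l - dR L R\<^sub>1 l)"
      by (rule mult_right_mono_neg)
    then show "?D l * (dR L R\<^sub>2 l - dR L R\<^sub>1 l) \<le> (Kg + \<delta> * KF) * (dR L R\<^sub>1 l - dR L R\<^sub>2 l)"
      by (simp add: algebra_simps)
  qed
  also have "\<dots> = (Kg + \<delta> * KF) * (R\<^sub>1 L - R\<^sub>2 L)"
    using integral_diff[OF dR_int(1)[OF R(1)] dR_int(1)[OF R(2)]] dR_int(2)[OF R(1)] dR_int(2)[OF R(2)]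
    by simp
  finally show ?thesis .
qed

end

section \<open>Incentive compatibility and participation\<close>

locale yaari_menu = yaari_model +
  fixes R :: "real \<Rightarrow> real \<Rightarrow> real" and p :: "real \<Rightarrow> real"
  assumes menu_retention: "\<And>\<theta>. \<theta> \<in> {thl..thh} \<Longrightarrow> retention L (R \<theta>)"
    and menu_submodular: "\<And>l \<theta> \<theta>'. l \<in> {0..L} \<Longrightarrow> \<theta> \<in> {thl..thh} \<Longrightarrow> \<theta>' \<in> {thl..thh} \<Longrightarrow>
        \<theta> \<le> \<theta>' \<Longrightarrow> dR L (R \<theta>') l \<le> dR L (R \<theta>) l"
begin

definition U :: "real \<Rightarrow> real \<Rightarrow> real" where
  "U \<theta> \<theta>' = Uag L (g \<theta>) (F \<theta>) (R \<theta>') (p \<theta>')"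

definition U_uninsured :: "real \<Rightarrow> real" where
  "U_uninsured \<theta> = Uag L (g \<theta>) (F \<theta>) (\<lambda>l. l) 0"

definition truthful_slope :: "real \<Rightarrow> real" where
  "truthful_slope s = utility_slope (R s) s"

lemma slope_sandwich:
  assumes "thl \<le> u" "u \<le> s" "s \<le> v" "v \<le> thh"
  shows "utility_slope (R u) s \<le> truthful_slope s \<and> truthful_slope s \<le> utility_slope (R v) s"
  unfolding truthful_slope_def using assms
  by (intro conjI utility_slope_antimono menu_retention menu_submodular) auto

lemma slope_gap:
  assumes "thl \<le> u" "u \<le> s" "s \<le> v" "v \<le> thh"
  shows "utility_slope (R v) s - utility_slope (R u) s
    \<le> - (Kg + \<delta> * KF) * R v L - - (Kg + \<delta> * KF) * R u L"
  using utility_slope_diff_le[OF menu_retention menu_retention, of u v s] menu_submodular[of _ u v] assms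
  by (simp add: algebra_simps)

lemma has_integral_U:
  "u \<in> {thl..thh} \<Longrightarrow> a \<in> {thl..thh} \<Longrightarrow> b \<in> {thl..thh} \<Longrightarrow> a \<le> b \<Longrightarrow>
    (utility_slope (R u) has_integral U b u - U a u) {a..b}"
  unfolding U_def by (rule has_integral_utility_slope[OF menu_retention])

lemma has_integral_U_uninsured:
  "a \<in> {thl..thh} \<Longrightarrow> b \<in> {thl..thh} \<Longrightarrow> a \<le> b \<Longrightarrow>
    (utility_slope (\<lambda>l. l) has_integral U_uninsured b - U_uninsured a) {a..b}"
  unfolding U_uninsured_def by (rule has_integral_utility_slope[OF retention_ident[OF L_pos]])

lemma integrable_truthful_slope:
  assumes "thl \<le> a" "b \<le> thh"
  shows "truthful_slope integrable_on {a..b}"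
proof -
  have "truthful_slope integrable_on {thl..thh}"
  proof (rule integrable_sandwiched_family[where \<psi>="\<lambda>u. utility_slope (R u)" and m="\<lambda>w. - (Kg + \<delta> * KF) * R w L"])
    show "utility_slope (R u) integrable_on {thl..thh}" if "u \<in> {thl..thh}" for u
      using has_integral_U[of u thl thh] that types_nontrivial by (auto simp: has_integral_integrable)
  qed (use types_nontrivial slope_sandwich slope_gap in auto)
  then show ?thesis
    by (rule integrable_subinterval_real) (use assms in auto)
qed

lemma envelope_if_incentive_compatible:
  assumes IC: "\<forall>\<theta>\<in>{thl..thh}. \<forall>\<theta>'\<in>{thl..thh}. U \<theta> \<theta>' \<le> U \<theta> \<theta>" and \<theta>: "\<theta> \<in> {thl..thh}"
  shows "U \<theta> \<theta> = U thl thl + integral {thl..\<theta>} truthful_slope"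
proof -
  have "integral {thl..\<theta>} truthful_slope = U \<theta> \<theta> - U thl thl"
  proof (rule integral_eq_if_sandwiched_family[where \<psi>="\<lambda>u. utility_slope (R u)" and m="\<lambda>w. - (Kg + \<delta> * KF) * R w L"])
    show "utility_slope (R u) integrable_on {thl..\<theta>}" if "u \<in> {thl..\<theta>}" for u
      using has_integral_U[of u thl \<theta>] that \<theta> by (auto simp: has_integral_integrable)
    show "integral {u..v} (utility_slope (R u)) \<le> U v v - U u u \<and> U v v - U u u \<le> integral {u..v} (utility_slope (R v))"
      if "thl \<le> u" "u \<le> v" "v \<le> \<theta>" for u v
      \<comment> \<open>Type \<open>v\<close> does not gain by reporting \<open>u\<close>, nor type \<open>u\<close> by reporting \<open>v\<close>.\<close>
      using has_integral_U[of u u v] has_integral_U[of v u v] IC that \<theta>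
      by (auto dest!: integral_unique)
  qed (use \<theta> slope_sandwich slope_gap in auto)
  then show ?thesis
    by simp
qed

lemma incentive_compatible_if_envelope:
  assumes envelope: "\<forall>\<theta>\<in>{thl..thh}. U \<theta> \<theta> = U thl thl + integral {thl..\<theta>} truthful_slope"
    and \<theta>: "\<theta> \<in> {thl..thh}" and \<theta>': "\<theta>' \<in> {thl..thh}"
  shows "U \<theta> \<theta>' \<le> U \<theta> \<theta>"
proof -
  have increment: "U v v - U u u = integral {u..v} truthful_slope"
    if "u \<in> {thl..thh}" "v \<in> {thl..thh}" "u \<le> v" for u v
  proof -
    have "integral {thl..u} truthful_slope + integral {u..v} truthful_slope = integral {thl..v} truthful_slope"
      using that integrable_truthful_slope[of thl v]
      by (intro Henstock_Kurzweil_Integration.integral_combine) auto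
    then show ?thesis
      using envelope[rule_format, OF that(1)] envelope[rule_format, OF that(2)] by linarith
  qed
  show ?thesis
  proof (cases "\<theta>' \<le> \<theta>")
    case True
    have "integral {\<theta>'..\<theta>} (utility_slope (R \<theta>')) \<le> integral {\<theta>'..\<theta>} truthful_slope"
      using has_integral_U[OF \<theta>' \<theta>' \<theta> True] integrable_truthful_slope[of \<theta>' \<theta>] slope_sandwich \<theta> \<theta>'
      by (intro integral_le) (auto simp: has_integral_integrable)
    then show ?thesis
      using has_integral_U[OF \<theta>' \<theta>' \<theta> True] increment[OF \<theta>' \<theta> True] by (simp add: integral_unique)
  next
    case False
    then have le: "\<theta> \<le> \<theta>'" by simp
    have "integral {\<theta>..\<theta>'} truthful_slope \<le> integral {\<theta>..\<theta>'} (utility_slope (R \<theta>'))"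
      using has_integral_U[OF \<theta>' \<theta> \<theta>' le] integrable_truthful_slope[of \<theta> \<theta>'] slope_sandwich \<theta> \<theta>'
      by (intro integral_le) (auto simp: has_integral_integrable)
    then show ?thesis
      using has_integral_U[OF \<theta>' \<theta> \<theta>' le] increment[OF \<theta> \<theta>' le] by (simp add: integral_unique)
  qed
qed

theorem incentive_compatible_iff_envelope:
  "(\<forall>\<theta>\<in>{thl..thh}. \<forall>\<theta>'\<in>{thl..thh}. U \<theta> \<theta>' \<le> U \<theta> \<theta>) \<longleftrightarrow>
   (\<forall>\<theta>\<in>{thl..thh}. U \<theta> \<theta> = U thl thl + integral {thl..\<theta>} truthful_slope)"
  using envelope_if_incentive_compatible incentive_compatible_if_envelope by blast

lemma participation_iff_lowest_type:
  assumes envelope: "\<forall>\<theta>\<in>{thl..thh}. U \<theta> \<theta> = U thl thl + integral {thl..\<theta>} truthful_slope"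
  shows "(\<forall>\<theta>\<in>{thl..thh}. U_uninsured \<theta> \<le> U \<theta> \<theta>) \<longleftrightarrow> U_uninsured thl \<le> U thl thl"
proof
  assume lowest: "U_uninsured thl \<le> U thl thl"
  show "\<forall>\<theta>\<in>{thl..thh}. U_uninsured \<theta> \<le> U \<theta> \<theta>"
  proof
    fix \<theta> assume \<theta>: "\<theta> \<in> {thl..thh}"
    have thl: "thl \<in> {thl..thh}"
      using types_nontrivial by simp
    have "integral {thl..\<theta>} (utility_slope (\<lambda>l. l)) \<le> integral {thl..\<theta>} truthful_slope"
    proof (rule integral_le)
      show "utility_slope (\<lambda>l. l) integrable_on {thl..\<theta>}"
        using has_integral_U_uninsured[OF thl \<theta>] \<theta> by (auto simp: has_integral_integrable)
      show "truthful_slope integrable_on {thl..\<theta>}"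
        using \<theta> by (intro integrable_truthful_slope) auto
      fix s assume "s \<in> {thl..\<theta>}"
      with \<theta> have s: "s \<in> {thl..thh}"
        by auto
      show "utility_slope (\<lambda>l. l) s \<le> truthful_slope s"
        unfolding truthful_slope_def
        by (rule utility_slope_antimono[OF menu_retention[OF s] retention_ident[OF L_pos] s])
          (use retention_dR_bounds[OF menu_retention[OF s]] dR_ident[OF L_pos] in auto)
    qed
    then show "U_uninsured \<theta> \<le> U \<theta> \<theta>"
      using has_integral_U_uninsured[OF thl \<theta>] \<theta> envelope[rule_format, OF \<theta>] lowest
      by (auto dest!: integral_unique)
  qed
qed (use types_nontrivial in auto)

lemma envelope_iff_price:
  "U \<theta> \<theta> = U thl thl + integral {thl..\<theta>} truthful_slope \<longleftrightarrow>
   p \<theta> = p thl + integral {0..L} (\<lambda>l. (1 - g thl (F thl l)) * dR L (R thl) l)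
     - integral {thl..\<theta>} truthful_slope - integral {0..L} (\<lambda>l. (1 - g \<theta> (F \<theta> l)) * dR L (R \<theta>) l)"
  unfolding U_def Uag_def by linarith

lemma participation_lowest_type_iff_price:
  "U_uninsured thl \<le> U thl thl \<longleftrightarrow>
   p thl \<le> integral {0..L} (\<lambda>l. (1 - g thl (F thl l)) * (1 - dR L (R thl) l))"
proof -
  have thl: "thl \<in> {thl..thh}"
    using types_nontrivial by simp
  have "(\<lambda>l. 1 - g thl (F thl l)) integrable_on {0..L}"
    using continuous_on_distorted[OF thl thl] by (intro integrable_continuous_interval continuous_intros)
  moreover have "(\<lambda>l. (1 - g thl (F thl l)) * dR L (R thl) l) integrable_on {0..L}"
    using integrable_diff[OF has_integral_integrable[OF retention_has_integral_dR[OF L_pos menu_retention[OF thl]]]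
        integrable_distorted_dR[OF menu_retention[OF thl] thl thl]]
    by (simp add: left_diff_distrib)
  ultimately have "integral {0..L} (\<lambda>l. (1 - g thl (F thl l)) * (1 - dR L (R thl) l))
      = integral {0..L} (\<lambda>l. 1 - g thl (F thl l)) - integral {0..L} (\<lambda>l. (1 - g thl (F thl l)) * dR L (R thl) l)"
    by (simp add: right_diff_distrib integral_diff)
  moreover have "U_uninsured thl = - integral {0..L} (\<lambda>l. 1 - g thl (F thl l))"
  proof -
    have "integral {0..L} (\<lambda>l. (1 - g thl (F thl l)) * dR L (\<lambda>l. l) l)
        = integral {0..L} (\<lambda>l. 1 - g thl (F thl l))"
      by (rule integral_cong) (simp add: dR_ident[OF L_pos])
    then show ?thesis
      by (simp add: U_uninsured_def Uag_def)
  qed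
  ultimately show ?thesis
    unfolding U_def Uag_def by linarith
qed

lemma truthful_slope_unfold:
  "truthful_slope = (\<lambda>s. integral {0..L} (\<lambda>l.
      (vector_derivative (\<lambda>u. g u (F s l)) (at s within {thl..thh})
       + vector_derivative (g s) (at (F s l) within {0..1}) * vector_derivative (\<lambda>u. F u l) (at s within {thl..thh}))
      * dR L (R s) l))"
  by (simp add: fun_eq_iff truthful_slope_def utility_slope_def dg_type_def dg_loss_def)

theorem participation_incentive_compatible_iff:
  "((\<forall>\<theta>\<in>{thl..thh}. U_uninsured \<theta> \<le> U \<theta> \<theta>) \<and> (\<forall>\<theta>\<in>{thl..thh}. \<forall>\<theta>'\<in>{thl..thh}. U \<theta> \<theta>' \<le> U \<theta> \<theta>)) \<longleftrightarrow>
   (\<forall>\<theta>\<in>{thl..thh}. p \<theta> = p thl + integral {0..L} (\<lambda>l. (1 - g thl (F thl l)) * dR L (R thl) l)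
      - integral {thl..\<theta>} truthful_slope - integral {0..L} (\<lambda>l. (1 - g \<theta> (F \<theta> l)) * dR L (R \<theta>) l))
   \<and> p thl \<le> integral {0..L} (\<lambda>l. (1 - g thl (F thl l)) * (1 - dR L (R thl) l))"
  using incentive_compatible_iff_envelope participation_iff_lowest_type envelope_iff_price
    participation_lowest_type_iff_price
  by blast

end

theorem corollary1:
  fixes M :: "'s measure"
    and Lo :: "real \<Rightarrow> 's \<Rightarrow> real"
    and F :: "real \<Rightarrow> real \<Rightarrow> real"
    and g :: "real \<Rightarrow> real \<Rightarrow> real"
    and gIn :: "real \<Rightarrow> real"
    and q :: "real \<Rightarrow> real"
    and mu :: "real measure"
    and thl thh Lbar \<delta> :: real
    and R :: "real \<Rightarrow> real \<Rightarrow> real"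
    and p :: "real \<Rightarrow> real"
  assumes P: "prob_space M"
    and Theta: "thl < thh"
    and Lbar: "0 < Lbar"
    and q_meas: "q \<in> borel_measurable borel"
    and q_nonneg: "\<And>\<theta>. 0 \<le> q \<theta>"
    and mu_def: "mu = density (restrict_space lborel {thl..thh}) (\<lambda>\<theta>. ennreal (q \<theta>))"
    and mu_prob: "prob_space mu"
    and Lo_meas: "\<And>\<theta>. \<theta> \<in> {thl..thh} \<Longrightarrow> Lo \<theta> \<in> borel_measurable M"
    and Lo_range: "\<And>\<theta> s. \<theta> \<in> {thl..thh} \<Longrightarrow> s \<in> space M \<Longrightarrow> Lo \<theta> s \<in> {0..Lbar}"
    and F_def: "\<And>\<theta> l. \<theta> \<in> {thl..thh} \<Longrightarrow> F \<theta> l = measure M {s \<in> space M. Lo \<theta> s \<le> l}"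
    and F_cont: "\<And>\<theta>. \<theta> \<in> {thl..thh} \<Longrightarrow> continuous_on UNIV (F \<theta>)"
    and distIn: "distortion gIn"
    and dist: "\<And>\<theta>. \<theta> \<in> {thl..thh} \<Longrightarrow> distortion (g \<theta>)"
    (* (A1) *)
    and A1: "\<And>t \<theta>. t \<in> {0..1} \<Longrightarrow> \<theta> \<in> {thl..thh} \<Longrightarrow> g \<theta> t \<le> gIn t"
    (* (A2) *)
    and A2_diff: "\<And>l \<theta>. \<theta> \<in> {thl..thh} \<Longrightarrow>
        (\<lambda>s. F s l) differentiable (at \<theta> within {thl..thh})"
    and A2_lip: "\<exists>K. \<forall>l. \<forall>\<theta>\<in>{thl..thh}. \<forall>\<theta>'\<in>{thl..thh}.
        \<bar>F \<theta> l - F \<theta>' l\<bar> \<le> K * \<bar>\<theta> - \<theta>'\<bar>"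
    and A2_mono: "\<And>l \<theta>. \<theta> \<in> {thl..thh} \<Longrightarrow>
        vector_derivative (\<lambda>s. F s l) (at \<theta> within {thl..thh}) \<le> 0"
    (* (A3) *)
    and A3_diff: "\<And>\<theta> t. \<theta> \<in> {thl..thh} \<Longrightarrow> t \<in> {0..1} \<Longrightarrow>
        g \<theta> differentiable (at t within {0..1})"
    and A3_bound: "\<And>\<theta> t. \<theta> \<in> {thl..thh} \<Longrightarrow> t \<in> {0..1} \<Longrightarrow>
        vector_derivative (g \<theta>) (at t within {0..1}) \<le> \<delta>"
    and A3_diff_theta: "\<And>\<theta> t. \<theta> \<in> {thl..thh} \<Longrightarrow> t \<in> {0..1} \<Longrightarrow>
        (\<lambda>s. g s t) differentiable (at \<theta> within {thl..thh})"
    and A3_lip: "\<exists>K. \<forall>t\<in>{0..1}. \<forall>\<theta>\<in>{thl..thh}. \<forall>\<theta>'\<in>{thl..thh}.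
        \<bar>g \<theta> t - g \<theta>' t\<bar> \<le> K * \<bar>\<theta> - \<theta>'\<bar>"
    and A3_mono: "\<And>\<theta> t. \<theta> \<in> {thl..thh} \<Longrightarrow> t \<in> {0<..<1} \<Longrightarrow>
        vector_derivative (\<lambda>s. g s t) (at \<theta> within {thl..thh}) \<le> 0"
    (* the menu *)
    and R_ret: "\<And>\<theta>. \<theta> \<in> {thl..thh} \<Longrightarrow> retention Lbar (R \<theta>)"
    and submod: "\<And>l \<theta> \<theta>'. l \<in> {0..Lbar} \<Longrightarrow> \<theta> \<in> {thl..thh} \<Longrightarrow> \<theta>' \<in> {thl..thh} \<Longrightarrow>
        \<theta> \<le> \<theta>' \<Longrightarrow> dR Lbar (R \<theta>') l \<le> dR Lbar (R \<theta>) l"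
    and U_int: "integrable mu (\<lambda>\<theta>. Uag Lbar (g \<theta>) (F \<theta>) (R \<theta>) (p \<theta>))"
    and V_int: "integrable mu (\<lambda>\<theta>. Vin Lbar gIn (F \<theta>) (R \<theta>) (p \<theta>))"
  shows "(((\<forall>\<theta>\<in>{thl..thh}. Uag Lbar (g \<theta>) (F \<theta>) (R \<theta>) (p \<theta>)
                              \<ge> Uag Lbar (g \<theta>) (F \<theta>) (\<lambda>l. l) 0)
          \<and> (\<integral>\<theta>. Vin Lbar gIn (F \<theta>) (R \<theta>) (p \<theta>) \<partial>mu) \<ge> 0)
         \<and> (\<forall>\<theta>\<in>{thl..thh}. \<forall>\<theta>'\<in>{thl..thh}.
              Uag Lbar (g \<theta>) (F \<theta>) (R \<theta>) (p \<theta>) \<ge> Uag Lbar (g \<theta>) (F \<theta>) (R \<theta>') (p \<theta>')))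
    \<longleftrightarrow>
         ((\<forall>\<theta>\<in>{thl..thh}.
              p \<theta> = p thl
                + integral {0..Lbar} (\<lambda>l. (1 - g thl (F thl l)) * dR Lbar (R thl) l)
                - integral {thl..\<theta>} (\<lambda>s. integral {0..Lbar} (\<lambda>l.
                    (vector_derivative (\<lambda>u. g u (F s l)) (at s within {thl..thh})
                     + vector_derivative (g s) (at (F s l) within {0..1})
                       * vector_derivative (\<lambda>u. F u l) (at s within {thl..thh}))
                    * dR Lbar (R s) l))
                - integral {0..Lbar} (\<lambda>l. (1 - g \<theta> (F \<theta> l)) * dR Lbar (R \<theta>) l))
          \<and> p thl \<le> integral {0..Lbar} (\<lambda>l. (1 - g thl (F thl l)) * (1 - dR Lbar (R thl) l))
          \<and> (\<integral>\<theta>. Vin Lbar gIn (F \<theta>) (R \<theta>) (p \<theta>) \<partial>mu) \<ge> 0)"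
proof -
  obtain KF where KF: "\<forall>l. \<forall>\<theta>\<in>{thl..thh}. \<forall>\<theta>'\<in>{thl..thh}. \<bar>F \<theta> l - F \<theta>' l\<bar> \<le> KF * \<bar>\<theta> - \<theta>'\<bar>"
    using A2_lip by blast
  obtain Kg where Kg: "\<forall>t\<in>{0..1}. \<forall>\<theta>\<in>{thl..thh}. \<forall>\<theta>'\<in>{thl..thh}. \<bar>g \<theta> t - g \<theta>' t\<bar> \<le> Kg * \<bar>\<theta> - \<theta>'\<bar>"
    using A3_lip by blast
  have F_range: "F \<theta> l \<in> {0..1}" if "\<theta> \<in> {thl..thh}" for \<theta> l
    using F_def[OF that, of l] prob_space.prob_le_1[OF P] measure_nonneg by auto
  interpret yaari_menu g F thl thh Lbar \<delta> KF Kg R p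
    by unfold_locales (use Theta Lbar F_range F_cont KF A2_diff A2_mono dist A3_diff A3_bound
        A3_diff_theta Kg A3_mono R_ret submod in auto)
  show ?thesis
    using participation_incentive_compatible_iff unfolding U_def U_uninsured_def truthful_slope_unfold
    by blast
qed

end
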